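(* Let $(\mathcal{G},v_0)$ be an initialized quantitative reachability game and $(\mathcal{X},x_0)$ its initialized extended game. A play $\rho^0\in\mathrm{Plays}_X(x_0)$ is the outcome of a subgame perfect equilibrium in $(\mathcal{X},x_0)$ if and only if $\rho^0\in\Lambda^*(x_0)$.
   Context: Games: an arena $G=(\Pi,V,(V_i)_{i\in\Pi},E)$ has finite player set $\Pi$, finite vertex set $V$ ($|V|\ge2$, $|\Pi|\le|V|$), a partition $(V_i)$ of $V$, and edges $E$ with every vertex having a successor. Plays are infinite paths, histories finite ones. A quantitative reachability game has target sets $F_i\subseteq V$ and $\mathrm{Cost}_i(\rho)=$ least $k$ with $\rho_k\in F_i$ (or $+\infty$). Strategies map histories ending in $V_i$ to successors; a profile $\sigma$ has outcome $\langle\sigma\rangle_{v_0}$ from $v_0$. $\sigma$ is a Nash equilibrium if no player $i$ can strictly decrease $\mathrm{Cost}_i$ of the outcome by changing only his own strategy; it is a subgame perfect equilibrium (SPE) if for every history $hv$ from the initial vertex, the profile $\sigma_{|h}$ ($\sigma_{i|h}(h')=\sigma_i(hh')$) is a Nash equilibrium in the subgame from $v$ with costs $\rho\mapsto\mathrm{Cost}_i(h\rho)$. Extended game: $\mathcal{X}$ is the reachability game on the arena $X=(\Pi,V^X,(V^X_i),E^X)$ with $V^X=V\times 2^\Pi$, $((v,I),(v',I'))\in E^X$ iff $(v,v')\in E$ and $I'=I\cup\{i\in\Pi: v'\in F_i\}$, $(v,I)\in V^X_i$ iff $v\in V_i$, target sets $F^X_i=\{(v,I): i\in I\}$, and reachability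 costs $\mathrm{Cost}_i$ with respect to these targets; $x_0=(v_0,I_0)$ with $I_0=\{i: v_0\in F_i\}$. For $u\in V^X$, $I(u)$ is its second component; $\mathrm{Plays}_X(u)$ are the plays of $X$ from $u$. Let $\mathcal{I}$ be the set of sets $I$ such that some $(v,I)$ is reachable from $x_0$, $N=|\mathcal{I}|$; the relation $I<I'$ iff $I\ne I'$ and some $(v',I')$ is reachable from some $(v,I)$ is a partial order on $\mathcal{I}$, and a fixed total order $J_1<\dots<J_N$ of $\mathcal{I}$ extends it. $V^{\ge J_n}=\{(v,J_m): v\in V, m\ge n\}$. Labelings: for $\lambda:V^X\to\mathbb{N}\cup\{+\infty\}$, a play $\rho$ of $X$ is $\lambda$-consistent if $\mathrm{Cost}_i(\rho_{\ge n})\le\lambda(\rho_n)$ for all $n$ and all $i$ with $\rho_n\in V^X_i$ (where $\rho_{\ge n}=\rho_n\rho_{n+1}\dots$). The sequence $(\lambda^k)$: $\lambda^0(u)=0$ if $u\in V^X_i$ and $i\in I(u)$, and $+\infty$ otherwise. The update of $\lambda^k$ w.r.t. $V^{\ge J_n}$ is $\lambda^{k+1}$ with $\lambda^{k+1}(u)=\lambda^k(u)$ for $u\notin V^{\ge J_n}$, and for $u\in V^{\ge J_n}\cap V^X_i$: $\lambda^{k+1}(u)=0$ if $i\in I(u)$, otherwise $\lambda^{k+1}(u)=1+\min_{(u,u')\in E^X}\sup\{\mathrm{Cost}_i(\rho):\rho\in\Lambda^k(u')\}$ (with $1+(+\infty)=+\infty$), where $\Lambda^k(u')$ is the set of $\lambda^k$-consistent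 plays from $u'$. The sequence is generated with $n_0=N$, $\lambda^{k+1}=$ update of $\lambda^k$ w.r.t. $V^{\ge J_{n_k}}$, and $n_{k+1}=n_k-1$ if $\lambda^{k+1}=\lambda^k$ and $n_k>1$, $n_{k+1}=n_k$ otherwise. This sequence eventually becomes constant: there is $k^*$ with $\lambda^{k^*+m}=\lambda^{k^*}$ for all $m$; $\lambda^*:=\lambda^{k^*}$ and $\Lambda^*(u)$ is the set of $\lambda^*$-consistent plays from $u$. *)

theory Defs
  imports Main "HOL-Library.Extended_Nat"
begin

text \<open>An arena is given by a player set Pi, a vertex set V, an owner function
  (encoding the partition (V_i)), and an edge relation E.\<close>

definition arena :: "'p set \<Rightarrow> 'a set \<Rightarrow> ('a \<Rightarrow> 'p) \<Rightarrow> ('a \<times> 'a) set \<Rightarrow> bool" where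
  "arena Pi V owner E \<longleftrightarrow>
     finite Pi \<and> finite V \<and> 2 \<le> card V \<and> card Pi \<le> card V \<and>
     (\<forall>v\<in>V. owner v \<in> Pi) \<and> E \<subseteq> V \<times> V \<and> (\<forall>v\<in>V. \<exists>v'. (v, v') \<in> E)"

definition is_play :: "('a \<times> 'a) set \<Rightarrow> (nat \<Rightarrow> 'a) \<Rightarrow> bool" where
  "is_play E \<rho> \<longleftrightarrow> (\<forall>n. (\<rho> n, \<rho> (Suc n)) \<in> E)"

definition plays_from :: "('a \<times> 'a) set \<Rightarrow> 'a \<Rightarrow> (nat \<Rightarrow> 'a) set" where
  "plays_from E v = {\<rho>. is_play E \<rho> \<and> \<rho> 0 = v}"

definition is_hist :: "'a set \<Rightarrow> ('a \<times> 'a) set \<Rightarrow> 'a list \<Rightarrow> bool" where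
  "is_hist V E h \<longleftrightarrow> h \<noteq> [] \<and> set h \<subseteq> V \<and> (\<forall>k. Suc k < length h \<longrightarrow> (h ! k, h ! Suc k) \<in> E)"

definition cost :: "('p \<Rightarrow> 'a set) \<Rightarrow> 'p \<Rightarrow> (nat \<Rightarrow> 'a) \<Rightarrow> enat" where
  "cost F i \<rho> = (if \<exists>k. \<rho> k \<in> F i then enat (LEAST k. \<rho> k \<in> F i) else \<infinity>)"

definition suffix_play :: "(nat \<Rightarrow> 'a) \<Rightarrow> nat \<Rightarrow> (nat \<Rightarrow> 'a)" where
  "suffix_play \<rho> n = (\<lambda>k. \<rho> (n + k))"

definition prepend :: "'a list \<Rightarrow> (nat \<Rightarrow> 'a) \<Rightarrow> (nat \<Rightarrow> 'a)" where
  "prepend h \<rho> = (\<lambda>n. if n < length h then h ! n else \<rho> (n - length h))"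

definition valid_strategy :: "'a set \<Rightarrow> ('a \<Rightarrow> 'p) \<Rightarrow> ('a \<times> 'a) set \<Rightarrow> 'p \<Rightarrow> ('a list \<Rightarrow> 'a) \<Rightarrow> bool" where
  "valid_strategy V owner E i \<sigma>i \<longleftrightarrow>
     (\<forall>h. is_hist V E h \<and> owner (last h) = i \<longrightarrow> (last h, \<sigma>i h) \<in> E)"

definition valid_profile :: "'p set \<Rightarrow> 'a set \<Rightarrow> ('a \<Rightarrow> 'p) \<Rightarrow> ('a \<times> 'a) set \<Rightarrow> ('p \<Rightarrow> 'a list \<Rightarrow> 'a) \<Rightarrow> bool" where
  "valid_profile Pi V owner E \<sigma> \<longleftrightarrow> (\<forall>i\<in>Pi. valid_strategy V owner E i (\<sigma> i))"

primrec out_hist :: "('a \<Rightarrow> 'p) \<Rightarrow> ('p \<Rightarrow> 'a list \<Rightarrow> 'a) \<Rightarrow> 'a \<Rightarrow> nat \<Rightarrow> 'a list" where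
  "out_hist owner \<sigma> v 0 = [v]"
| "out_hist owner \<sigma> v (Suc n) =
     out_hist owner \<sigma> v n @ [\<sigma> (owner (last (out_hist owner \<sigma> v n))) (out_hist owner \<sigma> v n)]"

definition outcome :: "('a \<Rightarrow> 'p) \<Rightarrow> ('p \<Rightarrow> 'a list \<Rightarrow> 'a) \<Rightarrow> 'a \<Rightarrow> (nat \<Rightarrow> 'a)" where
  "outcome owner \<sigma> v = (\<lambda>n. last (out_hist owner \<sigma> v n))"

definition restrict_profile :: "('p \<Rightarrow> 'a list \<Rightarrow> 'a) \<Rightarrow> 'a list \<Rightarrow> ('p \<Rightarrow> 'a list \<Rightarrow> 'a)" where
  "restrict_profile \<sigma> h = (\<lambda>i h'. \<sigma> i (h @ h'))"

text \<open>Nash equilibrium in the subgame from v reached after prefix h,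
  with costs rho |-> Cost_i(h rho).\<close>
definition is_NE_sub :: "'p set \<Rightarrow> 'a set \<Rightarrow> ('a \<Rightarrow> 'p) \<Rightarrow> ('a \<times> 'a) set \<Rightarrow> ('p \<Rightarrow> 'a set)
     \<Rightarrow> 'a list \<Rightarrow> 'a \<Rightarrow> ('p \<Rightarrow> 'a list \<Rightarrow> 'a) \<Rightarrow> bool" where
  "is_NE_sub Pi V owner E F h v \<sigma> \<longleftrightarrow>
     (\<forall>i\<in>Pi. \<forall>\<tau>. valid_strategy V owner E i \<tau> \<longrightarrow>
        cost F i (prepend h (outcome owner \<sigma> v))
          \<le> cost F i (prepend h (outcome owner (\<sigma>(i := \<tau>)) v)))"

definition is_SPE :: "'p set \<Rightarrow> 'a set \<Rightarrow> ('a \<Rightarrow> 'p) \<Rightarrow> ('a \<times> 'a) set \<Rightarrow> ('p \<Rightarrow> 'a set)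
     \<Rightarrow> 'a \<Rightarrow> ('p \<Rightarrow> 'a list \<Rightarrow> 'a) \<Rightarrow> bool" where
  "is_SPE Pi V owner E F v0 \<sigma> \<longleftrightarrow>
     valid_profile Pi V owner E \<sigma> \<and>
     (\<forall>g. is_hist V E g \<and> hd g = v0 \<longrightarrow>
        is_NE_sub Pi V owner E F (butlast g) (last g) (restrict_profile \<sigma> (butlast g)))"

definition VX :: "'p set \<Rightarrow> 'v set \<Rightarrow> ('v \<times> 'p set) set" where
  "VX Pi V = V \<times> Pow Pi"

definition EdgeX :: "'p set \<Rightarrow> 'v set \<Rightarrow> ('v \<times> 'v) set \<Rightarrow> ('p \<Rightarrow> 'v set)
     \<Rightarrow> (('v \<times> 'p set) \<times> ('v \<times> 'p set)) set" where
  "EdgeX Pi V E F = {((v, I), (v', I')). (v, I) \<in> VX Pi V \<and> (v, v') \<in> E \<and>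
                                      I' = I \<union> {i \<in> Pi. v' \<in> F i}}"

definition ownerX :: "('v \<Rightarrow> 'p) \<Rightarrow> ('v \<times> 'p set) \<Rightarrow> 'p" where
  "ownerX owner u = owner (fst u)"

definition FX :: "'p set \<Rightarrow> 'v set \<Rightarrow> 'p \<Rightarrow> ('v \<times> 'p set) set" where
  "FX Pi V i = {u \<in> VX Pi V. i \<in> snd u}"

definition x0 :: "'p set \<Rightarrow> ('p \<Rightarrow> 'v set) \<Rightarrow> 'v \<Rightarrow> 'v \<times> 'p set" where
  "x0 Pi F v0 = (v0, {i \<in> Pi. v0 \<in> F i})"

definition reach_sets :: "'p set \<Rightarrow> 'v set \<Rightarrow> ('v \<times> 'v) set \<Rightarrow> ('p \<Rightarrow> 'v set) \<Rightarrow> 'v \<Rightarrow> 'p set set" where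
  "reach_sets Pi V E F v0 = {I. \<exists>v. (x0 Pi F v0, (v, I)) \<in> (EdgeX Pi V E F)\<^sup>*}"

definition Iless :: "'p set \<Rightarrow> 'v set \<Rightarrow> ('v \<times> 'v) set \<Rightarrow> ('p \<Rightarrow> 'v set) \<Rightarrow> 'p set \<Rightarrow> 'p set \<Rightarrow> bool" where
  "Iless Pi V E F I I' \<longleftrightarrow> I \<noteq> I' \<and> (\<exists>v v'. ((v, I), (v', I')) \<in> (EdgeX Pi V E F)\<^sup>*)"

definition linear_ext :: "'p set \<Rightarrow> 'v set \<Rightarrow> ('v \<times> 'v) set \<Rightarrow> ('p \<Rightarrow> 'v set) \<Rightarrow> 'v
     \<Rightarrow> (nat \<Rightarrow> 'p set) \<Rightarrow> bool" where
  "linear_ext Pi V E F v0 J \<longleftrightarrow>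
     bij_betw J {1..card (reach_sets Pi V E F v0)} (reach_sets Pi V E F v0) \<and>
     (\<forall>m\<in>{1..card (reach_sets Pi V E F v0)}. \<forall>n\<in>{1..card (reach_sets Pi V E F v0)}.
         Iless Pi V E F (J m) (J n) \<longrightarrow> m < n)"

type_synonym ('v, 'p) labeling = "'v \<times> 'p set \<Rightarrow> enat"

definition Lam :: "'p set \<Rightarrow> 'v set \<Rightarrow> ('v \<Rightarrow> 'p) \<Rightarrow> ('v \<times> 'v) set \<Rightarrow> ('p \<Rightarrow> 'v set)
     \<Rightarrow> ('v, 'p) labeling \<Rightarrow> 'v \<times> 'p set \<Rightarrow> (nat \<Rightarrow> 'v \<times> 'p set) set" where
  "Lam Pi V owner E F lam u =
     {\<rho> \<in> plays_from (EdgeX Pi V E F) u.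
        \<forall>n. cost (FX Pi V) (ownerX owner (\<rho> n)) (suffix_play \<rho> n) \<le> lam (\<rho> n)}"

definition lam0 :: "('v \<Rightarrow> 'p) \<Rightarrow> ('v, 'p) labeling" where
  "lam0 owner u = (if ownerX owner u \<in> snd u then 0 else \<infinity>)"

definition Vge :: "'v set \<Rightarrow> (nat \<Rightarrow> 'p set) \<Rightarrow> nat \<Rightarrow> nat \<Rightarrow> ('v \<times> 'p set) set" where
  "Vge V J N n = {(v, J m) | v m. v \<in> V \<and> n \<le> m \<and> m \<le> N}"

definition lam_update :: "'p set \<Rightarrow> 'v set \<Rightarrow> ('v \<Rightarrow> 'p) \<Rightarrow> ('v \<times> 'v) set \<Rightarrow> ('p \<Rightarrow> 'v set)
     \<Rightarrow> (nat \<Rightarrow> 'p set) \<Rightarrow> nat \<Rightarrow> nat \<Rightarrow> ('v, 'p) labeling \<Rightarrow> ('v, 'p) labeling" where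
  "lam_update Pi V owner E F J N n lam u =
     (if u \<in> Vge V J N n then
        (if ownerX owner u \<in> snd u then 0
         else 1 + (INF u' \<in> {u'. (u, u') \<in> EdgeX Pi V E F}.
                     SUP \<rho> \<in> Lam Pi V owner E F lam u'. cost (FX Pi V) (ownerX owner u) \<rho>))
      else lam u)"

primrec lam_seq :: "'p set \<Rightarrow> 'v set \<Rightarrow> ('v \<Rightarrow> 'p) \<Rightarrow> ('v \<times> 'v) set \<Rightarrow> ('p \<Rightarrow> 'v set)
     \<Rightarrow> (nat \<Rightarrow> 'p set) \<Rightarrow> nat \<Rightarrow> nat \<Rightarrow> ('v, 'p) labeling \<times> nat" where
  "lam_seq Pi V owner E F J N 0 = (lam0 owner, N)"
| "lam_seq Pi V owner E F J N (Suc k) =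
     (let (lam, n) = lam_seq Pi V owner E F J N k;
          lam' = lam_update Pi V owner E F J N n lam
      in (lam', if lam' = lam \<and> 1 < n then n - 1 else n))"

definition lam_star :: "'p set \<Rightarrow> 'v set \<Rightarrow> ('v \<Rightarrow> 'p) \<Rightarrow> ('v \<times> 'v) set \<Rightarrow> ('p \<Rightarrow> 'v set)
     \<Rightarrow> 'v \<Rightarrow> (nat \<Rightarrow> 'p set) \<Rightarrow> ('v, 'p) labeling" where
  "lam_star Pi V owner E F v0 J =
     (let N = card (reach_sets Pi V E F v0);
          kstar = (LEAST k. \<forall>m. fst (lam_seq Pi V owner E F J N (k + m))
                                 = fst (lam_seq Pi V owner E F J N k))
      in fst (lam_seq Pi V owner E F J N kstar))"

end

theory Submission
  imports Defs "HOL-Library.FuncSet"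
begin

text \<open>
  Both directions rest on consistency of subgame outcomes. If \<sigma> is a subgame perfect
  equilibrium, induction on k shows that all its subgame outcomes are \<lambda>^k-consistent: at an
  updated vertex u whose owner i has not reached his target, i may deviate once to any successor
  u' and then return to \<sigma>; the resulting play continues with a \<lambda>^k-consistent subgame outcome
  from u', so the equilibrium property bounds the cost of i from u by one plus the worst cost of
  a \<lambda>^k-consistent play from u', which is the updated label.

  Conversely, a \<lambda>*-consistent play \<rho>0 is the outcome of the profile that follows \<rho>0 and, as
  soon as a player deviates from x to w, switches to a \<lambda>*-consistent play from w that costs
  the deviator at least \<lambda>*(x) - 1. Such punishments exist because \<lambda>* is a fixed point of the
  update on the reachable region and the supremum of the costs of consistent plays is attained
  (a compactness argument). The sets of consistent plays are nonempty because subgame perfect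
  equilibria exist: they are obtained as limits of backward-induction profiles of the games
  truncated at increasing horizons.
\<close>

lemma enat_le_by_finite_bounds: "(\<And>c. b \<le> enat c \<Longrightarrow> a \<le> enat c) \<Longrightarrow> a \<le> (b::enat)"
  by (cases b; cases a) auto

lemma enat_eq_by_finite_bounds: "(\<And>c. a \<le> enat c \<longleftrightarrow> b \<le> enat c) \<Longrightarrow> a = (b::enat)"
  by (meson enat_le_by_finite_bounds order_antisym)

lemma ex_min_on:
  fixes f :: "'a \<Rightarrow> 'b::wellorder"
  assumes "S \<noteq> {}"
  shows "\<exists>x\<in>S. \<forall>y\<in>S. f x \<le> f y"
proof -
  let ?m = "LEAST z. z \<in> f ` S"
  have "?m \<in> f ` S" using assms by (meson LeastI ex_in_conv imageI)
  moreover have "\<forall>y\<in>S. ?m \<le> f y" by (simp add: Least_le)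
  ultimately show ?thesis by (metis imageE)
qed

lemma decreasing_eventually_const:
  fixes f :: "nat \<Rightarrow> 'a::wellorder"
  assumes "\<And>k. f (Suc k) \<le> f k"
  shows "\<exists>K. \<forall>k\<ge>K. f k = f K"
proof -
  obtain K where K: "f K = (LEAST x. x \<in> range f)"
    by (metis (mono_tags, lifting) LeastI rangeE rangeI)
  have "f k = f K" if "K \<le> k" for k
  proof (rule antisym)
    show "f k \<le> f K" using lift_Suc_antimono_le[of f, OF assms that] .
    show "f K \<le> f k" unfolding K by (rule Least_le) simp
  qed
  then show ?thesis by blast
qed

lemma infinite_fibre_subset:
  assumes "finite (f ` A)" "infinite A"
  shows "\<exists>A'. A' \<subseteq> A \<and> infinite A' \<and> (\<exists>y. \<forall>x\<in>A'. f x = y)"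
proof -
  obtain y where "y \<in> f ` A" "infinite (f -` {y} \<inter> A)" using inf_img_fin_dom'[OF assms] by blast
  then show ?thesis by (intro exI[of _ "f -` {y} \<inter> A"]) auto
qed

text \<open>The proof is a diagonal argument along nested infinite sets of indices d on which the
  restriction of s d to K L is constant.\<close>

lemma ex_cluster_map:
  fixes s :: "nat \<Rightarrow> 'k \<Rightarrow> 'b" and K :: "nat \<Rightarrow> 'k set"
  assumes finK: "\<And>L. finite (K L)" and monoK: "\<And>L. K L \<subseteq> K (Suc L)"
    and finB: "finite B" and inB: "\<And>d L x. x \<in> K L \<Longrightarrow> s d x \<in> B"
  shows "\<exists>t. \<forall>L D. \<exists>d\<ge>D. \<forall>x\<in>K L. s d x = t x"
proof -
  define r where "r L d = restrict (s d) (K L)" for L d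
  have finr: "finite (r L ` A)" for L A
  proof (rule finite_subset)
    show "r L ` A \<subseteq> PiE (K L) (\<lambda>_. B)" using inB by (auto simp: r_def)
    show "finite (PiE (K L) (\<lambda>_. B))" using finK finB by (simp add: finite_PiE)
  qed
  define sub where "sub L A = (SOME A'. A' \<subseteq> A \<and> infinite A' \<and> (\<exists>f. \<forall>d\<in>A'. r L d = f))"
    for L and A :: "nat set"
  have sub: "sub L A \<subseteq> A \<and> infinite (sub L A) \<and> (\<exists>f. \<forall>d\<in>sub L A. r L d = f)"
    if inf: "infinite A" for L A
    unfolding sub_def by (rule someI_ex) (rule infinite_fibre_subset[OF finr inf])
  define S where "S = rec_nat (sub 0 UNIV) (\<lambda>L A. sub (Suc L) A)"
  have S_Suc: "S (Suc L) = sub (Suc L) (S L)" for L by (simp add: S_def)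
  have S: "infinite (S L) \<and> (\<exists>f. \<forall>d\<in>S L. r L d = f)" for L
  proof (induction L)
    case 0
    then show ?case using sub[of UNIV 0] by (simp add: S_def)
  next
    case (Suc L)
    then show ?case using sub[of "S L" "Suc L"] S_Suc by simp
  qed
  have "S (Suc L) \<subseteq> S L" for L using sub[of "S L" "Suc L"] S S_Suc by simp
  then have S_antimono: "L' \<le> L \<Longrightarrow> S L \<subseteq> S L'" for L L'
    by (rule lift_Suc_antimono_le[of S])
  define t where "t x = s (SOME d. d \<in> S (LEAST L. x \<in> K L)) x" for x
  have "\<exists>d\<ge>D. \<forall>x\<in>K L. s d x = t x" for L D
  proof -
    obtain d where d: "d \<in> S L" "d \<ge> D" using S[of L] by (meson infinite_nat_iff_unbounded_le)
    have "s d x = t x" if x: "x \<in> K L" for x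
    proof -
      let ?Lx = "LEAST L. x \<in> K L"
      have x_Lx: "x \<in> K ?Lx" using x by (rule LeastI)
      have "d \<in> S ?Lx" using S_antimono[OF Least_le[of "\<lambda>L. x \<in> K L", OF x]] d by blast
      moreover have "(SOME d. d \<in> S ?Lx) \<in> S ?Lx"
        using S[of ?Lx] by (metis finite.emptyI some_in_eq)
      moreover obtain f where "\<forall>d\<in>S ?Lx. r ?Lx d = f" using S by blast
      ultimately have "r ?Lx d x = r ?Lx (SOME d. d \<in> S ?Lx) x" by simp
      then show ?thesis using x_Lx by (simp add: r_def t_def)
    qed
    then show ?thesis using d by blast
  qed
  then show ?thesis by blast
qed

definition cons_play :: "'a \<Rightarrow> (nat \<Rightarrow> 'a) \<Rightarrow> nat \<Rightarrow> 'a" where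
  "cons_play x \<rho> = (\<lambda>n. case n of 0 \<Rightarrow> x | Suc m \<Rightarrow> \<rho> m)"

lemma cons_play_0 [simp]: "cons_play x \<rho> 0 = x"
  and cons_play_Suc [simp]: "cons_play x \<rho> (Suc n) = \<rho> n"
  by (simp_all add: cons_play_def)

lemma suffix_play_apply [simp]: "suffix_play \<rho> n m = \<rho> (n + m)"
  by (simp add: suffix_play_def)

lemma suffix_play_0 [simp]: "suffix_play \<rho> 0 = \<rho>"
  by (simp add: suffix_play_def)

lemma suffix_suffix_play [simp]: "suffix_play (suffix_play \<rho> n) m = suffix_play \<rho> (n + m)"
  by (simp add: suffix_play_def add.assoc)

lemma suffix_cons_play [simp]: "suffix_play (cons_play x \<rho>) 1 = \<rho>"
  by (simp add: suffix_play_def)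

lemma cons_play_suffix_play: "cons_play (\<rho> 0) (suffix_play \<rho> 1) = \<rho>"
  by (auto simp: cons_play_def split: nat.splits)

lemma map_cons_play: "map (cons_play v \<rho>) [0..<Suc n] = v # map \<rho> [0..<n]"
  by (induction n) auto

lemma map_upt_add: "map \<rho> [0..<n + m] = map \<rho> [0..<n] @ map (suffix_play \<rho> n) [0..<m]"
  by (induction m) auto

lemma map_upt_Suc_Suc: "map \<rho> [0..<Suc (Suc m)] = \<rho> 0 # map (suffix_play \<rho> 1) [0..<Suc m]"
  using map_upt_add[of \<rho> 1 "Suc m"] by simp

lemma cost_le_enat_iff: "cost F i \<rho> \<le> enat c \<longleftrightarrow> (\<exists>p\<le>c. \<rho> p \<in> F i)"
proof
  assume a: "cost F i \<rho> \<le> enat c"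
  then have ex: "\<exists>k. \<rho> k \<in> F i" by (auto simp: cost_def split: if_splits)
  with a have "(LEAST k. \<rho> k \<in> F i) \<le> c" by (simp add: cost_def)
  moreover have "\<rho> (LEAST k. \<rho> k \<in> F i) \<in> F i" using ex by (rule LeastI_ex)
  ultimately show "\<exists>p\<le>c. \<rho> p \<in> F i" by blast
next
  assume "\<exists>p\<le>c. \<rho> p \<in> F i"
  then obtain p where p: "p \<le> c" "\<rho> p \<in> F i" by blast
  then have "(LEAST k. \<rho> k \<in> F i) \<le> p" by (simp add: Least_le)
  then show "cost F i \<rho> \<le> enat c" using p by (auto simp: cost_def)
qed

lemma cost_eq_0_iff: "cost F i \<rho> = 0 \<longleftrightarrow> \<rho> 0 \<in> F i"
  using cost_le_enat_iff[of F i \<rho> 0] by (simp add: zero_enat_def[symmetric])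

lemma cost_cons_play: "cost F i (cons_play x \<rho>) = (if x \<in> F i then 0 else eSuc (cost F i \<rho>))"
proof (cases "x \<in> F i")
  case True
  then show ?thesis using cost_eq_0_iff[of F i "cons_play x \<rho>"] by simp
next
  case False
  have "cost F i (cons_play x \<rho>) \<le> enat c \<longleftrightarrow> eSuc (cost F i \<rho>) \<le> enat c" for c
  proof (cases c)
    case 0
    then show ?thesis using False by (simp add: cost_eq_0_iff zero_enat_def[symmetric])
  next
    case (Suc d)
    have "cost F i (cons_play x \<rho>) \<le> enat c \<longleftrightarrow> (\<exists>p\<le>d. \<rho> p \<in> F i)"
      unfolding cost_le_enat_iff
    proof
      assume "\<exists>p\<le>c. cons_play x \<rho> p \<in> F i"
      then obtain p where "p \<le> c" "cons_play x \<rho> p \<in> F i" by blast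
      then show "\<exists>p\<le>d. \<rho> p \<in> F i" using False Suc by (cases p) auto
    next
      assume "\<exists>p\<le>d. \<rho> p \<in> F i"
      then obtain p where "p \<le> d" "\<rho> p \<in> F i" by blast
      then show "\<exists>p\<le>c. cons_play x \<rho> p \<in> F i" using Suc by (intro exI[of _ "Suc p"]) simp
    qed
    moreover have "eSuc (cost F i \<rho>) \<le> enat c \<longleftrightarrow> cost F i \<rho> \<le> enat d"
      using Suc by (simp add: eSuc_enat[symmetric])
    ultimately show ?thesis by (simp only: cost_le_enat_iff)
  qed
  then show ?thesis using False by (simp add: enat_eq_by_finite_bounds)
qed

lemma cost_unfold: "cost F i \<rho> = (if \<rho> 0 \<in> F i then 0 else eSuc (cost F i (suffix_play \<rho> 1)))"
  using cost_cons_play[of F i "\<rho> 0" "suffix_play \<rho> 1"] by (simp only: cons_play_suffix_play)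

lemma cost_le_eSuc_cost_suffix: "cost F i \<rho> \<le> eSuc (cost F i (suffix_play \<rho> 1))"
  by (subst cost_unfold) simp

lemma cost_prepend_le_enat_iff:
  "cost F i (prepend b \<rho>) \<le> enat c \<longleftrightarrow>
     (\<exists>p<length b. p \<le> c \<and> b ! p \<in> F i) \<or> (length b \<le> c \<and> cost F i \<rho> \<le> enat (c - length b))"
  unfolding cost_le_enat_iff prepend_def
proof safe
  fix p assume "p \<le> c" "(if p < length b then b ! p else \<rho> (p - length b)) \<in> F i"
    "\<not> (\<exists>p<length b. p \<le> c \<and> b ! p \<in> F i)"
  then show "length b \<le> c" "\<exists>p\<le>c - length b. \<rho> p \<in> F i"
    by (auto split: if_splits intro!: exI[of _ "p - length b"])
next
  fix p assume "p < length b" "p \<le> c" "b ! p \<in> F i"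
  then show "\<exists>p\<le>c. (if p < length b then b ! p else \<rho> (p - length b)) \<in> F i" by auto
next
  fix p assume "length b \<le> c" "p \<le> c - length b" "\<rho> p \<in> F i"
  then show "\<exists>p\<le>c. (if p < length b then b ! p else \<rho> (p - length b)) \<in> F i"
    by (intro exI[of _ "p + length b"]) auto
qed

lemma cost_prepend_mono:
  assumes "cost F i \<rho> \<le> cost F i \<rho>'"
  shows "cost F i (prepend b \<rho>) \<le> cost F i (prepend b \<rho>')"
  by (rule enat_le_by_finite_bounds)
    (use assms in \<open>meson order_trans cost_prepend_le_enat_iff\<close>)

lemma cost_prepend_avoiding:
  assumes "\<forall>x\<in>set b. x \<notin> F i"
  shows "cost F i (prepend b \<rho>) = enat (length b) + cost F i \<rho>"
proof (rule enat_eq_by_finite_bounds)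
  fix c
  have "\<not> (\<exists>p<length b. p \<le> c \<and> b ! p \<in> F i)" using assms nth_mem by blast
  moreover have "enat (length b) + cost F i \<rho> \<le> enat c \<longleftrightarrow>
      length b \<le> c \<and> cost F i \<rho> \<le> enat (c - length b)"
    by (cases "cost F i \<rho>") auto
  ultimately show "cost F i (prepend b \<rho>) \<le> enat c \<longleftrightarrow> enat (length b) + cost F i \<rho> \<le> enat c"
    unfolding cost_prepend_le_enat_iff by blast
qed

lemma prepend_cons_play: "prepend b (cons_play x \<rho>) = prepend (b @ [x]) \<rho>"
proof
  fix n
  show "prepend b (cons_play x \<rho>) n = prepend (b @ [x]) \<rho> n"
  proof (cases "n - length b")
    case (Suc k)
    then have "n - Suc (length b) = k" by simp
    then show ?thesis using Suc by (auto simp: prepend_def nth_append)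
  qed (auto simp: prepend_def nth_append)
qed

lemma prepend_butlast:
  assumes "g \<noteq> []" "\<rho> 0 = last g"
  shows "prepend (butlast g) \<rho> = prepend g (suffix_play \<rho> 1)"
proof -
  have "prepend (butlast g) \<rho> = prepend (butlast g) (cons_play (\<rho> 0) (suffix_play \<rho> 1))"
    by (simp only: cons_play_suffix_play)
  also have "\<dots> = prepend g (suffix_play \<rho> 1)"
    using assms by (simp add: prepend_cons_play)
  finally show ?thesis .
qed

lemma prepend_agree:
  assumes "\<forall>p\<le>M. x p = y p" "p \<le> length b + M"
  shows "prepend b x p = prepend b y p"
  using assms by (auto simp: prepend_def)

lemma cost_prepend_le_enat_cong:
  assumes "\<forall>p. length b + p \<le> c \<longrightarrow> x p = y p"
  shows "cost F i (prepend b x) \<le> enat c \<longleftrightarrow> cost F i (prepend b y) \<le> enat c"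
proof -
  have "prepend b x p = prepend b y p" if "p \<le> c" for p
    using assms that by (simp add: prepend_def)
  then show ?thesis unfolding cost_le_enat_iff by auto
qed

definition horizon_cost :: "nat \<Rightarrow> ('p \<Rightarrow> 'a set) \<Rightarrow> 'p \<Rightarrow> (nat \<Rightarrow> 'a) \<Rightarrow> enat" where
  "horizon_cost D F i \<rho> = (if cost F i \<rho> \<le> enat D then cost F i \<rho> else \<infinity>)"

lemma cost_le_horizon_cost: "cost F i \<rho> \<le> horizon_cost D F i \<rho>"
  by (simp add: horizon_cost_def)

lemma horizon_cost_le: "cost F i \<rho> \<le> enat c \<Longrightarrow> c \<le> D \<Longrightarrow> horizon_cost D F i \<rho> \<le> enat c"
  by (auto simp: horizon_cost_def intro: order_trans)

lemma horizon_cost_agree: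
  assumes "\<forall>p\<le>D. x p = y p"
  shows "horizon_cost D F i x = horizon_cost D F i y"
proof -
  have bounded: "cost F i x \<le> enat c \<longleftrightarrow> cost F i y \<le> enat c" if "c \<le> D" for c
  proof -
    have "(\<exists>p\<le>c. x p \<in> F i) \<longleftrightarrow> (\<exists>p\<le>c. y p \<in> F i)"
      using assms that by (metis order_trans)
    then show ?thesis by (simp add: cost_le_enat_iff)
  qed
  show ?thesis
  proof (cases "cost F i x \<le> enat D")
    case True
    then have yD: "cost F i y \<le> enat D" using bounded by simp
    have "cost F i x \<le> enat c \<longleftrightarrow> cost F i y \<le> enat c" for c
    proof (cases "c \<le> D")
      case False
      then have "enat D \<le> enat c" by simp
      then show ?thesis using True yD by (meson order_trans)
    qed (rule bounded)
    then have "cost F i x = cost F i y" by (rule enat_eq_by_finite_bounds)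
    then show ?thesis by (simp add: horizon_cost_def)
  next
    case False
    then show ?thesis using bounded[of D] by (simp add: horizon_cost_def)
  qed
qed

lemma out_hist_eq_map: "out_hist owner \<sigma> v n = map (outcome owner \<sigma> v) [0..<Suc n]"
proof (induction n)
  case (Suc n)
  have "out_hist owner \<sigma> v (Suc n) = out_hist owner \<sigma> v n @ [outcome owner \<sigma> v (Suc n)]"
    by (simp add: outcome_def)
  then show ?case using Suc.IH by simp
qed (simp add: outcome_def)

lemma outcome_0 [simp]: "outcome owner \<sigma> v 0 = v"
  by (simp add: outcome_def)

lemma outcome_Suc:
  "outcome owner \<sigma> v (Suc n) = \<sigma> (owner (outcome owner \<sigma> v n)) (map (outcome owner \<sigma> v) [0..<Suc n])"
proof -
  have "outcome owner \<sigma> v (Suc n) = \<sigma> (owner (last (out_hist owner \<sigma> v n))) (out_hist owner \<sigma> v n)"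
    by (simp add: outcome_def)
  then show ?thesis by (simp add: out_hist_eq_map)
qed

lemma outcome_prefix_agree:
  assumes "\<rho> = outcome owner \<sigma> v" "\<rho>' = outcome owner \<sigma>' v"
    and "\<forall>m<M. \<sigma> (owner (\<rho> m)) (map \<rho> [0..<Suc m]) = \<sigma>' (owner (\<rho> m)) (map \<rho> [0..<Suc m])"
  shows "\<forall>p\<le>M. \<rho> p = \<rho>' p"
  using assms(3)
proof (induction M)
  case (Suc M)
  have IH: "\<forall>p\<le>M. \<rho> p = \<rho>' p"
    using Suc less_SucI by blast
  then have prefix: "map \<rho> [0..<Suc M] = map \<rho>' [0..<Suc M]"
    by (intro map_cong) auto
  have last: "\<rho> M = \<rho>' M" using IH by simp
  have "\<rho> (Suc M) = \<sigma> (owner (\<rho> M)) (map \<rho> [0..<Suc M])"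
    unfolding assms(1) by (rule outcome_Suc)
  also have "\<dots> = \<sigma>' (owner (\<rho> M)) (map \<rho> [0..<Suc M])"
    using Suc.prems by blast
  also have "\<dots> = \<sigma>' (owner (\<rho>' M)) (map \<rho>' [0..<Suc M])"
    by (simp only: prefix last)
  also have "\<dots> = \<rho>' (Suc M)"
    unfolding assms(2) by (rule outcome_Suc[symmetric])
  finally show ?case using IH by (auto simp: le_Suc_eq)
qed (use assms(1,2) in simp)

lemma outcome_eqI:
  assumes "\<rho> 0 = v" "\<And>n. \<rho> (Suc n) = \<sigma> (owner (\<rho> n)) (map \<rho> [0..<Suc n])"
  shows "outcome owner \<sigma> v = \<rho>"
proof -
  have "\<forall>p\<le>n. outcome owner \<sigma> v p = \<rho> p" for n
  proof (induction n)
    case (Suc n)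
    then have prefix: "map (outcome owner \<sigma> v) [0..<Suc n] = map \<rho> [0..<Suc n]"
      and last: "outcome owner \<sigma> v n = \<rho> n"
      by (auto intro: map_cong)
    have "outcome owner \<sigma> v (Suc n) = \<rho> (Suc n)"
      by (simp only: outcome_Suc prefix last assms(2))
    then show ?case using Suc by (auto simp: le_Suc_eq)
  qed (use assms in simp)
  then show ?thesis by auto
qed

lemma restrict_profile_Nil [simp]: "restrict_profile \<sigma> [] = \<sigma>"
  and restrict_profile_apply [simp]: "restrict_profile \<sigma> b i h = \<sigma> i (b @ h)"
  by (simp_all add: restrict_profile_def)

lemma suffix_outcome_restrict_profile:
  assumes "\<rho> = outcome owner (restrict_profile \<sigma> b) v"
  shows "suffix_play \<rho> n = outcome owner (restrict_profile \<sigma> (b @ map \<rho> [0..<n])) (\<rho> n)"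
proof (rule sym, rule outcome_eqI)
  fix m
  have split: "map \<rho> [0..<Suc (n + m)] = map \<rho> [0..<n] @ map (suffix_play \<rho> n) [0..<Suc m]"
    using map_upt_add[of \<rho> n "Suc m"] by simp
  have "\<rho> (Suc (n + m)) = restrict_profile \<sigma> b (owner (\<rho> (n + m))) (map \<rho> [0..<Suc (n + m)])"
    unfolding assms by (rule outcome_Suc)
  then show "suffix_play \<rho> n (Suc m) = restrict_profile \<sigma> (b @ map \<rho> [0..<n])
      (owner (suffix_play \<rho> n m)) (map (suffix_play \<rho> n) [0..<Suc m])"
    by (simp only: split append_assoc suffix_play_apply restrict_profile_apply add_Suc_right)
qed simp

locale extended_game =
  fixes Pi :: "'p set" and V :: "'v set" and owner :: "'v \<Rightarrow> 'p"
    and E :: "('v \<times> 'v) set" and F :: "'p \<Rightarrow> 'v set"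
  assumes arena: "arena Pi V owner E"
begin

abbreviation "VXs \<equiv> VX Pi V"
abbreviation "EXs \<equiv> EdgeX Pi V E F"
abbreviation "FXs \<equiv> FX Pi V"
abbreviation "ownX \<equiv> ownerX owner"
abbreviation "costX \<equiv> cost (FX Pi V)"
abbreviation "histX \<equiv> is_hist (VX Pi V) (EdgeX Pi V E F)"
abbreviation "consistent \<equiv> Lam Pi V owner E F"

lemma finite_Pi: "finite Pi"
  using arena by (simp add: arena_def)

lemma finite_VX: "finite VXs"
  using arena by (simp add: arena_def VX_def)

lemma edgeX_in_VX: "(u, w) \<in> EXs \<Longrightarrow> u \<in> VXs \<and> w \<in> VXs"
  using arena by (auto simp: EdgeX_def VX_def arena_def)

lemma edgeX_snd_subset: "(u, w) \<in> EXs \<Longrightarrow> snd u \<subseteq> snd w"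
  by (auto simp: EdgeX_def)

lemma edgeX_succ_ex: "u \<in> VXs \<Longrightarrow> \<exists>w. (u, w) \<in> EXs"
proof -
  assume u: "u \<in> VXs"
  obtain v I where uv: "u = (v, I)" by fastforce
  with u have "v \<in> V" by (simp add: VX_def)
  then obtain v' where "(v, v') \<in> E" using arena by (auto simp: arena_def)
  then have "(u, (v', I \<union> {i \<in> Pi. v' \<in> F i})) \<in> EXs" using u uv by (auto simp: EdgeX_def)
  then show ?thesis by blast
qed

lemma ownX_in_Pi: "u \<in> VXs \<Longrightarrow> ownX u \<in> Pi"
  using arena by (auto simp: arena_def VX_def ownerX_def)

lemma FXs_iff: "u \<in> FXs i \<longleftrightarrow> u \<in> VXs \<and> i \<in> snd u"
  by (simp add: FX_def)

lemma play_in_VX: "is_play EXs \<rho> \<Longrightarrow> \<rho> n \<in> VXs"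
  using edgeX_in_VX[of "\<rho> n" "\<rho> (Suc n)"] by (simp add: is_play_def)

definition some_succ :: "'v \<times> 'p set \<Rightarrow> 'v \<times> 'p set" where
  "some_succ u = (SOME w. (u, w) \<in> EXs)"

lemma some_succ: "u \<in> VXs \<Longrightarrow> (u, some_succ u) \<in> EXs"
  unfolding some_succ_def using edgeX_succ_ex by (meson someI_ex)

lemma histX_single [simp]: "histX [v] \<longleftrightarrow> v \<in> VXs"
  by (simp add: is_hist_def)

lemma histX_snoc: "h \<noteq> [] \<Longrightarrow> histX (h @ [w]) \<longleftrightarrow> histX h \<and> (last h, w) \<in> EXs"
  by (auto simp: is_hist_def nth_append last_conv_nth less_Suc_eq dest: edgeX_in_VX)
    (metis One_nat_def diff_Suc_1)

lemma histX_last_in_VX: "histX h \<Longrightarrow> last h \<in> VXs"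
  unfolding is_hist_def by auto

lemma histX_appendD:
  assumes "histX (b @ h)" "h \<noteq> []"
  shows "histX h"
  unfolding is_hist_def
proof (intro conjI allI impI)
  show "set h \<subseteq> VXs" using assms by (auto simp: is_hist_def)
  fix k assume "Suc k < length h"
  then have "((b @ h) ! (length b + k), (b @ h) ! (length b + Suc k)) \<in> EXs"
    using assms(1) unfolding is_hist_def by (metis add_Suc_right add_less_cancel_left length_append)
  then show "(h ! k, h ! Suc k) \<in> EXs"
    by (simp only: nth_append_length_plus)
qed fact

lemma histX_snd_subset_last: "histX g \<Longrightarrow> x \<in> set g \<Longrightarrow> snd x \<subseteq> snd (last g)"
proof (induction g rule: rev_induct)
  case (snoc w g)
  show ?case
  proof (cases "g = []")
    case False
    then have "histX g" "snd (last g) \<subseteq> snd w"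
      using snoc.prems histX_snoc edgeX_snd_subset by blast+
    then show ?thesis using snoc by auto
  qed (use snoc in simp)
qed simp

lemma consistent_suffix: "\<rho> \<in> consistent lam u \<Longrightarrow> suffix_play \<rho> n \<in> consistent lam (\<rho> n)"
  by (auto simp: Lam_def plays_from_def is_play_def)

lemma consistent_mono:
  assumes "\<forall>x. lam x \<le> lam' x"
  shows "consistent lam u \<subseteq> consistent lam' u"
  unfolding Lam_def by (auto intro: order_trans[OF _ assms[rule_format]])

definition valid_from :: "('v \<times> 'p set) list \<Rightarrow> 'v \<times> 'p set
    \<Rightarrow> ('p \<Rightarrow> ('v \<times> 'p set) list \<Rightarrow> 'v \<times> 'p set) \<Rightarrow> bool" where
  "valid_from b v \<sigma> \<longleftrightarrow>
     (\<forall>h. histX (b @ h) \<and> h \<noteq> [] \<and> hd h = v \<longrightarrow> (last h, \<sigma> (ownX (last h)) h) \<in> EXs)"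

lemma outcome_valid_from:
  assumes valid: "valid_from b v \<sigma>" and bv: "histX (b @ [v])"
  shows "outcome ownX \<sigma> v \<in> plays_from EXs v"
    and "histX (b @ map (outcome ownX \<sigma> v) [0..<Suc n])"
proof -
  let ?\<rho> = "outcome ownX \<sigma> v"
  have step: "histX (b @ map ?\<rho> [0..<Suc n]) \<and> (?\<rho> n, ?\<rho> (Suc n)) \<in> EXs" for n
  proof (induction n)
    case 0
    have "(v, \<sigma> (ownX v) [v]) \<in> EXs"
      using valid bv unfolding valid_from_def by (auto dest: spec[where x="[v]"])
    then show ?case using bv outcome_Suc[of ownX \<sigma> v 0] by simp
  next
    case (Suc n)
    let ?h = "map ?\<rho> [0..<Suc (Suc n)]"
    have "histX (b @ ?h)"
      using Suc histX_snoc[of "b @ map ?\<rho> [0..<Suc n]" "?\<rho> (Suc n)"] by simp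
    moreover have "hd ?h = v" by (simp del: upt_Suc add: hd_map)
    moreover have "?h \<noteq> []" by simp
    ultimately have "(last ?h, \<sigma> (ownX (last ?h)) ?h) \<in> EXs"
      using valid unfolding valid_from_def by blast
    moreover have "last ?h = ?\<rho> (Suc n)" by simp
    ultimately have "(?\<rho> (Suc n), ?\<rho> (Suc (Suc n))) \<in> EXs"
      by (simp only: outcome_Suc[of ownX \<sigma> v "Suc n"])
    then show ?case using \<open>histX (b @ ?h)\<close> by simp
  qed
  then show "?\<rho> \<in> plays_from EXs v" by (simp add: plays_from_def is_play_def)
  show "histX (b @ map ?\<rho> [0..<Suc n])" using step by blast
qed

lemma valid_from_restrict_profile:
  assumes "valid_profile Pi VXs ownX EXs \<sigma>"
  shows "valid_from b v (restrict_profile \<sigma> b)"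
  unfolding valid_from_def
proof (intro allI impI)
  fix h assume h: "histX (b @ h) \<and> h \<noteq> [] \<and> hd h = v"
  then have "ownX (last h) \<in> Pi" using histX_appendD histX_last_in_VX ownX_in_Pi by blast
  then show "(last h, restrict_profile \<sigma> b (ownX (last h)) h) \<in> EXs"
    using assms h unfolding valid_profile_def valid_strategy_def by (metis last_appendR restrict_profile_apply)
qed

lemma valid_from_deviation:
  assumes "valid_from b v \<sigma>" "valid_strategy VXs ownX EXs j \<tau>"
  shows "valid_from b v (\<sigma>(j := \<tau>))"
  using assms histX_appendD unfolding valid_from_def valid_strategy_def by fastforce


definition follows_except ::
    "'p \<Rightarrow> ('p \<Rightarrow> ('v \<times> 'p set) list \<Rightarrow> 'v \<times> 'p set) \<Rightarrow> ('v \<times> 'p set) list \<Rightarrow> (nat \<Rightarrow> 'v \<times> 'p set) \<Rightarrow> bool" where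
  "follows_except j \<sigma> b \<rho> \<longleftrightarrow>
     (\<forall>m. ownX (\<rho> m) \<noteq> j \<longrightarrow> \<rho> (Suc m) = \<sigma> (ownX (\<rho> m)) (b @ map \<rho> [0..<Suc m]))"

lemma follows_except_deviation:
  "follows_except j \<sigma> b (outcome ownX ((restrict_profile \<sigma> b)(j := \<tau>)) v)"
  unfolding follows_except_def using outcome_Suc[of ownX "(restrict_profile \<sigma> b)(j := \<tau>)" v]
  by (simp del: upt_Suc)

lemma follows_except_suffix:
  assumes "follows_except j \<sigma> (butlast g) \<rho>" "g \<noteq> []" "\<rho> 0 = last g"
  shows "follows_except j \<sigma> g (suffix_play \<rho> 1)"
  unfolding follows_except_def
proof (intro allI impI)
  fix m assume "ownX (suffix_play \<rho> 1 m) \<noteq> j"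
  then have step: "\<rho> (Suc (Suc m)) = \<sigma> (ownX (\<rho> (Suc m))) (butlast g @ map \<rho> [0..<Suc (Suc m)])"
    using assms(1) unfolding follows_except_def by (simp del: upt_Suc)
  have prefix: "butlast g @ map \<rho> [0..<Suc (Suc m)] = g @ map (suffix_play \<rho> 1) [0..<Suc m]"
    using map_upt_Suc_Suc[of \<rho> m] assms(2,3)
    by (metis append_Cons append_assoc self_append_conv2 append_butlast_last_id)
  have "suffix_play \<rho> 1 (Suc m) = \<rho> (Suc (Suc m))" "ownX (suffix_play \<rho> 1 m) = ownX (\<rho> (Suc m))"
    by simp_all
  then show "suffix_play \<rho> 1 (Suc m) = \<sigma> (ownX (suffix_play \<rho> 1 m)) (g @ map (suffix_play \<rho> 1) [0..<Suc m])"
    by (simp only: step prefix)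
qed

end

section \<open>Subgame outcomes of equilibria are consistent\<close>

declare lam_seq.simps(2) [simp del]

context extended_game
begin

abbreviation "lseq J N k \<equiv> lam_seq Pi V owner E F J N k"

lemma lam_seq_Suc:
  "fst (lseq J N (Suc k)) = lam_update Pi V owner E F J N (snd (lseq J N k)) (fst (lseq J N k))"
  "snd (lseq J N (Suc k)) =
     (if fst (lseq J N (Suc k)) = fst (lseq J N k) \<and> 1 < snd (lseq J N k)
      then snd (lseq J N k) - 1 else snd (lseq J N k))"
  by (simp_all add: split_beta Let_def lam_seq.simps(2))

abbreviation subgame_outcome ::
    "('p \<Rightarrow> ('v \<times> 'p set) list \<Rightarrow> 'v \<times> 'p set) \<Rightarrow> ('v \<times> 'p set) list \<Rightarrow> nat \<Rightarrow> 'v \<times> 'p set" where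
  "subgame_outcome \<sigma> g \<equiv> outcome ownX (restrict_profile \<sigma> (butlast g)) (last g)"

lemma subgame_outcomes_consistentI:
  assumes valid: "valid_profile Pi VXs ownX EXs \<sigma>"
    and root: "\<And>g. histX g \<Longrightarrow> hd g = u0 \<Longrightarrow> costX (ownX (last g)) (subgame_outcome \<sigma> g) \<le> lam (last g)"
    and g: "histX g" "hd g = u0"
  shows "subgame_outcome \<sigma> g \<in> consistent lam (last g)"
proof -
  let ?b = "butlast g" and ?\<rho> = "subgame_outcome \<sigma> g"
  have g_eq: "?b @ [last g] = g" using g by (simp add: is_hist_def)
  note outcome = outcome_valid_from[OF valid_from_restrict_profile[OF valid], of ?b "last g"]
  have "costX (ownX (?\<rho> n)) (suffix_play ?\<rho> n) \<le> lam (?\<rho> n)" for n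
  proof -
    let ?g' = "?b @ map ?\<rho> [0..<Suc n]"
    have "histX ?g'" using outcome(2) g g_eq by simp
    moreover have "hd ?g' = u0"
    proof (cases "?b = []")
      case True
      then obtain x where "g = [x]" using g_eq by (metis append_Nil)
      then show ?thesis using g True by (simp del: upt_Suc add: hd_map hd_upt)
    next
      case False
      then show ?thesis using g g_eq by (metis hd_append2)
    qed
    moreover have "butlast ?g' = ?b @ map ?\<rho> [0..<n]" by (simp add: butlast_append)
    moreover have "suffix_play ?\<rho> n = outcome ownX (restrict_profile \<sigma> (?b @ map ?\<rho> [0..<n])) (?\<rho> n)"
      by (rule suffix_outcome_restrict_profile) simp
    ultimately show ?thesis using root[of ?g'] by simp
  qed
  moreover have "?\<rho> \<in> plays_from EXs (last g)" using outcome(1) g g_eq by simp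
  ultimately show ?thesis by (simp add: Lam_def)
qed

text \<open>After its single deviation player i returns to \<sigma> i; the last branch only makes the
  strategy total.\<close>

definition one_shot_deviation ::
    "('p \<Rightarrow> ('v \<times> 'p set) list \<Rightarrow> 'v \<times> 'p set) \<Rightarrow> 'p \<Rightarrow> ('v \<times> 'p set) list
      \<Rightarrow> 'v \<times> 'p set \<Rightarrow> 'v \<times> 'p set \<Rightarrow> ('v \<times> 'p set) list \<Rightarrow> 'v \<times> 'p set" where
  "one_shot_deviation \<sigma> i b v u' h =
     (if h = [v] then u'
      else if histX (b @ h) \<and> h \<noteq> [] \<and> hd h = v then \<sigma> i (b @ h)
      else some_succ (last h))"

lemma valid_one_shot_deviation:
  assumes "valid_profile Pi VXs ownX EXs \<sigma>" "(v, u') \<in> EXs"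
  shows "valid_strategy VXs ownX EXs i (one_shot_deviation \<sigma> i b v u')"
  unfolding valid_strategy_def
proof (intro allI impI)
  fix h assume h: "histX h \<and> ownX (last h) = i"
  have "(last h, restrict_profile \<sigma> b (ownX (last h)) h) \<in> EXs"
    if "histX (b @ h) \<and> h \<noteq> [] \<and> hd h = v"
    using valid_from_restrict_profile[OF assms(1)] that unfolding valid_from_def by blast
  then show "(last h, one_shot_deviation \<sigma> i b v u' h) \<in> EXs"
    using assms(2) h some_succ histX_last_in_VX by (auto simp: one_shot_deviation_def)
qed

lemma outcome_one_shot_deviation:
  assumes valid: "valid_profile Pi VXs ownX EXs \<sigma>" and g: "histX g" and e: "(last g, u') \<in> EXs"
    and i: "ownX (last g) = i"
  shows "outcome ownX ((restrict_profile \<sigma> (butlast g))(i := one_shot_deviation \<sigma> i (butlast g) (last g) u'))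
           (last g)
         = cons_play (last g) (outcome ownX (restrict_profile \<sigma> g) u')"
proof (rule outcome_eqI)
  let ?b = "butlast g" and ?v = "last g"
  let ?\<rho> = "outcome ownX (restrict_profile \<sigma> g) u'"
  let ?\<sigma>' = "(restrict_profile \<sigma> ?b)(i := one_shot_deviation \<sigma> i ?b ?v u')"
  have g_eq: "g = ?b @ [?v]" using g by (simp add: is_hist_def)
  have "histX (g @ [u'])" using g e g_eq histX_snoc by (metis snoc_eq_iff_butlast)
  then have hist: "histX (g @ map ?\<rho> [0..<Suc m])" for m
    using outcome_valid_from(2)[OF valid_from_restrict_profile[OF valid]] by blast
  fix n
  show "cons_play ?v ?\<rho> (Suc n) = ?\<sigma>' (ownX (cons_play ?v ?\<rho> n)) (map (cons_play ?v ?\<rho>) [0..<Suc n])"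
  proof (cases n)
    case 0
    then show ?thesis using i by (simp add: one_shot_deviation_def)
  next
    case (Suc m)
    have h: "map (cons_play ?v ?\<rho>) [0..<Suc n] = ?v # map ?\<rho> [0..<Suc m]"
      unfolding Suc by (rule map_cons_play)
    have g_h: "g @ map ?\<rho> [0..<Suc m] = ?b @ ?v # map ?\<rho> [0..<Suc m]"
      using g_eq by (metis append_Cons append_assoc self_append_conv2)
    have next_step: "?\<rho> (Suc m) = \<sigma> (ownX (?\<rho> m)) (?b @ ?v # map ?\<rho> [0..<Suc m])"
      using outcome_Suc[of ownX "restrict_profile \<sigma> g" u' m] by (simp only: restrict_profile_apply g_h)
    have "histX (?b @ ?v # map ?\<rho> [0..<Suc m])"
      using hist[of m] by (simp only: g_h)
    then have deviation: "one_shot_deviation \<sigma> i ?b ?v u' (?v # map ?\<rho> [0..<Suc m])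
        = \<sigma> i (?b @ ?v # map ?\<rho> [0..<Suc m])"
      unfolding one_shot_deviation_def by (simp del: upt_Suc)
    show ?thesis
      unfolding Suc cons_play_Suc h[unfolded Suc] next_step
      using deviation by (cases "ownX (?\<rho> m) = i") simp_all
  qed
qed simp

lemma SPE_cost_le_one_shot_deviation:
  assumes SPE: "is_SPE Pi VXs ownX EXs FXs u0 \<sigma>" and g: "histX g" "hd g = u0"
    and not_reached: "ownX (last g) \<notin> snd (last g)" and e: "(last g, u') \<in> EXs"
  shows "costX (ownX (last g)) (subgame_outcome \<sigma> g)
           \<le> eSuc (costX (ownX (last g)) (subgame_outcome \<sigma> (g @ [u'])))"
proof -
  let ?b = "butlast g" and ?i = "ownX (last g)"
  let ?\<tau> = "one_shot_deviation \<sigma> ?i ?b (last g) u'"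
  have valid: "valid_profile Pi VXs ownX EXs \<sigma>" using SPE by (simp add: is_SPE_def)
  have i: "?i \<in> Pi" using g histX_last_in_VX ownX_in_Pi by blast
  have "is_NE_sub Pi VXs ownX EXs FXs ?b (last g) (restrict_profile \<sigma> ?b)"
    using SPE g by (simp add: is_SPE_def)
  then have "costX ?i (prepend ?b (subgame_outcome \<sigma> g))
      \<le> costX ?i (prepend ?b (outcome ownX ((restrict_profile \<sigma> ?b)(?i := ?\<tau>)) (last g)))"
    using i valid_one_shot_deviation[OF valid e] unfolding is_NE_sub_def by blast
  also have "\<dots> = costX ?i (prepend ?b (cons_play (last g) (subgame_outcome \<sigma> (g @ [u']))))"
    using outcome_one_shot_deviation[OF valid g(1) e refl] by simp
  finally have le: "costX ?i (prepend ?b (subgame_outcome \<sigma> g))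
      \<le> costX ?i (prepend ?b (cons_play (last g) (subgame_outcome \<sigma> (g @ [u']))))" .
  \<comment> \<open>targets are never lost, so the history before last g has not reached player i's target\<close>
  have "\<forall>x\<in>set ?b. x \<notin> FXs ?i"
    using not_reached histX_snd_subset_last[OF g(1)] by (auto simp: FXs_iff dest: in_set_butlastD)
  then have "costX ?i (subgame_outcome \<sigma> g) \<le> costX ?i (cons_play (last g) (subgame_outcome \<sigma> (g @ [u'])))"
    using le by (simp add: cost_prepend_avoiding)
  moreover have "last g \<notin> FXs ?i" using not_reached by (simp add: FXs_iff)
  ultimately show ?thesis by (simp add: cost_cons_play)
qed

lemma SPE_subgame_outcomes_consistent_lam0:
  assumes SPE: "is_SPE Pi VXs ownX EXs FXs u0 \<sigma>" and g: "histX g" "hd g = u0"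
  shows "subgame_outcome \<sigma> g \<in> consistent (lam0 owner) (last g)"
proof (rule subgame_outcomes_consistentI[OF _ _ g])
  show "valid_profile Pi VXs ownX EXs \<sigma>" using SPE by (simp add: is_SPE_def)
  fix g' assume "histX g'" "hd g' = u0"
  then show "costX (ownX (last g')) (subgame_outcome \<sigma> g') \<le> lam0 owner (last g')"
    using histX_last_in_VX by (simp add: lam0_def cost_eq_0_iff FXs_iff)
qed

lemma SPE_subgame_outcomes_consistent_update:
  assumes SPE: "is_SPE Pi VXs ownX EXs FXs u0 \<sigma>"
    and consistent: "\<And>g. histX g \<Longrightarrow> hd g = u0 \<Longrightarrow> subgame_outcome \<sigma> g \<in> consistent lam (last g)"
    and g: "histX g" "hd g = u0"
  shows "subgame_outcome \<sigma> g \<in> consistent (lam_update Pi V owner E F J N n lam) (last g)"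
proof (rule subgame_outcomes_consistentI[OF _ _ g])
  show "valid_profile Pi VXs ownX EXs \<sigma>" using SPE by (simp add: is_SPE_def)
  fix g' assume g': "histX g'" "hd g' = u0"
  let ?u = "last g'" and ?\<rho> = "subgame_outcome \<sigma> g'"
  let ?i = "ownX ?u"
  have "\<forall>n. costX (ownX (?\<rho> n)) (suffix_play ?\<rho> n) \<le> lam (?\<rho> n)"
    using consistent[OF g'] by (simp add: Lam_def)
  from this[rule_format, of 0] have root: "costX ?i ?\<rho> \<le> lam ?u" by simp
  show "costX ?i ?\<rho> \<le> lam_update Pi V owner E F J N n lam ?u"
  proof (cases "?u \<in> Vge V J N n \<and> ?i \<notin> snd ?u")
    case not_updated: False
    show ?thesis
    proof (cases "?u \<in> Vge V J N n")
      case True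
      with not_updated have "?i \<in> snd ?u" by blast
      then have "costX ?i ?\<rho> = 0" using g' histX_last_in_VX by (simp add: cost_eq_0_iff FXs_iff)
      then show ?thesis by simp
    next
      case False
      then show ?thesis using root by (simp add: lam_update_def)
    qed
  next
    case True
    have "costX ?i (suffix_play ?\<rho> 1) \<le> (SUP \<rho>\<in>consistent lam u'. costX ?i \<rho>)"
      if e: "(?u, u') \<in> EXs" for u'
    proof -
      have "eSuc (costX ?i (suffix_play ?\<rho> 1)) = costX ?i ?\<rho>"
        using True by (subst (2) cost_unfold) (simp add: FXs_iff)
      also have "\<dots> \<le> eSuc (costX ?i (subgame_outcome \<sigma> (g' @ [u'])))"
        using SPE_cost_le_one_shot_deviation[OF SPE g'] True e by blast
      finally have "costX ?i (suffix_play ?\<rho> 1) \<le> costX ?i (subgame_outcome \<sigma> (g' @ [u']))"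
        by simp
      also have "\<dots> \<le> (SUP \<rho>\<in>consistent lam u'. costX ?i \<rho>)"
      proof (rule SUP_upper)
        have "g' \<noteq> []" using g' by (simp add: is_hist_def)
        then have "histX (g' @ [u'])" "hd (g' @ [u']) = u0" using g' e histX_snoc by simp_all
        then show "subgame_outcome \<sigma> (g' @ [u']) \<in> consistent lam u'"
          using consistent by fastforce
      qed
      finally show ?thesis .
    qed
    then have "costX ?i (suffix_play ?\<rho> 1)
        \<le> (INF u'\<in>{u'. (?u, u') \<in> EXs}. SUP \<rho>\<in>consistent lam u'. costX ?i \<rho>)"
      by (auto intro: INF_greatest)
    moreover have "costX ?i ?\<rho> = eSuc (costX ?i (suffix_play ?\<rho> 1))"
      using True by (subst cost_unfold) (simp add: FXs_iff)
    ultimately show ?thesis using True by (simp add: lam_update_def plus_1_eSuc)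
  qed
qed

lemma SPE_subgame_outcomes_consistent:
  assumes SPE: "is_SPE Pi VXs ownX EXs FXs u0 \<sigma>" and g: "histX g" "hd g = u0"
  shows "subgame_outcome \<sigma> g \<in> consistent (fst (lseq J N k)) (last g)"
  using g
proof (induction k arbitrary: g)
  case 0
  then have "subgame_outcome \<sigma> g \<in> consistent (lam0 owner) (last g)"
    by (rule SPE_subgame_outcomes_consistent_lam0[OF SPE])
  then show ?case by (simp only: lam_seq.simps fst_conv)
next
  case (Suc k)
  then show ?case
    unfolding lam_seq_Suc(1) using SPE_subgame_outcomes_consistent_update[OF SPE] by blast
qed

section \<open>Stabilisation of the labelling sequence\<close>

lemma Vge_antimono: "n' \<le> n \<Longrightarrow> Vge V J N n \<subseteq> Vge V J N n'"
  unfolding Vge_def using le_trans by blast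

lemma Vge_subset_VX: "\<forall>m\<in>{1..N}. J m \<subseteq> Pi \<Longrightarrow> 1 \<le> n \<Longrightarrow> Vge V J N n \<subseteq> VXs"
  unfolding Vge_def VX_def by force

lemma lseq_index_bounds: "1 \<le> N \<Longrightarrow> 1 \<le> snd (lseq J N k) \<and> snd (lseq J N k) \<le> N"
  by (induction k) (auto simp: lam_seq_Suc(2))

lemma lseq_index_decreasing: "snd (lseq J N (Suc k)) \<le> snd (lseq J N k)"
  by (simp add: lam_seq_Suc(2))

lemma lseq_outside_Vge: "u \<notin> Vge V J N (snd (lseq J N k)) \<Longrightarrow> fst (lseq J N k) u = lam0 owner u"
proof (induction k)
  case (Suc k)
  then have "u \<notin> Vge V J N (snd (lseq J N k))"
    using Vge_antimono[OF lseq_index_decreasing] by blast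
  then show ?case using Suc.IH by (simp add: lam_seq_Suc(1) lam_update_def)
qed simp

lemma lam_update_le_lam0: "u \<in> Vge V J N n \<Longrightarrow> lam_update Pi V owner E F J N n lam u \<le> lam0 owner u"
  by (simp add: lam_update_def lam0_def)

lemma lam_update_in_Vge_cong:
  "u \<in> Vge V J N n \<Longrightarrow> u \<in> Vge V J N n' \<Longrightarrow>
     lam_update Pi V owner E F J N n lam u = lam_update Pi V owner E F J N n' lam u"
  by (simp add: lam_update_def)

lemma lam_update_mono:
  assumes "\<forall>x. lam x \<le> lam' x"
  shows "lam_update Pi V owner E F J N n lam u \<le> lam_update Pi V owner E F J N n lam' u"
proof -
  have "(SUP \<rho>\<in>consistent lam u'. costX i \<rho>) \<le> (SUP \<rho>\<in>consistent lam' u'. costX i \<rho>)" for u' i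
    by (rule SUP_subset_mono[OF consistent_mono[OF assms]]) simp
  then have "(INF u'\<in>S. SUP \<rho>\<in>consistent lam u'. costX i \<rho>) \<le> (INF u'\<in>S. SUP \<rho>\<in>consistent lam' u'. costX i \<rho>)"
    for S i by (rule INF_mono')
  then show ?thesis using assms[rule_format, of u] by (simp add: lam_update_def add_left_mono)
qed

text \<open>Outside the current region the labels keep their initial value, inside it the update is
  monotone in the previous labelling.\<close>

lemma lseq_decreasing: "fst (lseq J N (Suc k)) u \<le> fst (lseq J N k) u"
proof (induction k arbitrary: u)
  case 0
  show ?case
  proof (cases "u \<in> Vge V J N (snd (lseq J N 0))")
    case True
    then show ?thesis using lam_update_le_lam0[OF True] by (simp add: lam_seq_Suc(1))
  next
    case False
    then show ?thesis by (simp add: lam_seq_Suc(1) lam_update_def)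
  qed
next
  case (Suc k)
  show ?case
  proof (cases "u \<in> Vge V J N (snd (lseq J N (Suc k)))")
    case False
    then show ?thesis by (simp add: lam_seq_Suc(1)[of J N "Suc k"] lam_update_def)
  next
    case in_Vge: True
    show ?thesis
    proof (cases "u \<in> Vge V J N (snd (lseq J N k))")
      case True
      have "fst (lseq J N (Suc (Suc k))) u
          = lam_update Pi V owner E F J N (snd (lseq J N k)) (fst (lseq J N (Suc k))) u"
        using lam_update_in_Vge_cong[OF in_Vge True] by (simp only: lam_seq_Suc(1))
      also have "\<dots> \<le> lam_update Pi V owner E F J N (snd (lseq J N k)) (fst (lseq J N k)) u"
        using Suc.IH by (blast intro: lam_update_mono)
      finally show ?thesis by (simp only: lam_seq_Suc(1))
    next
      case False
      then have "fst (lseq J N (Suc k)) u = fst (lseq J N k) u"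
        by (simp add: lam_seq_Suc(1) lam_update_def)
      also have "\<dots> = lam0 owner u" using lseq_outside_Vge[OF False] .
      finally have "fst (lseq J N (Suc k)) u = lam0 owner u" .
      then show ?thesis using lam_update_le_lam0[OF in_Vge] by (simp only: lam_seq_Suc(1))
    qed
  qed
qed

lemma lseq_eventually_const:
  assumes J: "\<forall>m\<in>{1..N}. J m \<subseteq> Pi" and N: "1 \<le> N"
  shows "\<exists>K. \<forall>m. fst (lseq J N (K + m)) = fst (lseq J N K)"
proof -
  have "\<exists>K. \<forall>k\<ge>K. fst (lseq J N k) u = fst (lseq J N K) u" for u
    by (rule decreasing_eventually_const) (rule lseq_decreasing)
  then have "\<forall>u\<in>VXs. \<exists>K. \<forall>k\<ge>K. fst (lseq J N k) u = fst (lseq J N K) u" by blast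
  from bchoice[OF this] obtain K
    where K: "\<forall>u\<in>VXs. \<forall>k\<ge>K u. fst (lseq J N k) u = fst (lseq J N (K u)) u"
    by blast
  let ?K = "Max (K ` VXs)"
  have "fst (lseq J N (?K + m)) u = fst (lseq J N ?K) u" for m u
  proof (cases "u \<in> VXs")
    case True
    then have le: "K u \<le> ?K" using finite_VX by simp
    have "fst (lseq J N (?K + m)) u = fst (lseq J N (K u)) u"
      by (rule K[rule_format, OF True]) (use le in simp)
    also have "\<dots> = fst (lseq J N ?K) u"
      by (rule K[rule_format, OF True, symmetric]) (use le in simp)
    finally show ?thesis .
  next
    case False
    then have "u \<notin> Vge V J N (snd (lseq J N k))" for k
      using Vge_subset_VX[OF J] lseq_index_bounds[OF N] by blast
    then show ?thesis by (simp add: lseq_outside_Vge)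
  qed
  then show ?thesis by blast
qed

text \<open>Once the labelling is constant, the region index has been decreased down to 1, so the
  limit labelling is a fixed point of the update on the whole reachable region.\<close>

lemma lseq_limit_fixpoint:
  assumes J: "\<forall>m\<in>{1..N}. J m \<subseteq> Pi" and N: "1 \<le> N"
  defines "kstar \<equiv> LEAST k. \<forall>m. fst (lseq J N (k + m)) = fst (lseq J N k)"
  shows "lam_update Pi V owner E F J N 1 (fst (lseq J N kstar)) = fst (lseq J N kstar)"
proof -
  have const: "\<forall>m. fst (lseq J N (kstar + m)) = fst (lseq J N kstar)"
    unfolding kstar_def by (rule LeastI_ex) (rule lseq_eventually_const[OF J N])
  have index: "snd (lseq J N (kstar + m)) = max 1 (snd (lseq J N kstar) - m)" for m
  proof (induction m)
    case 0
    then show ?case using lseq_index_bounds[OF N, of J kstar] by simp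
  next
    case (Suc m)
    have "fst (lseq J N (Suc (kstar + m))) = fst (lseq J N (kstar + m))"
      using const[rule_format, of "Suc m"] const[rule_format, of m] by simp
    then show ?case using Suc.IH by (simp add: lam_seq_Suc(2))
  qed
  have "snd (lseq J N (kstar + N)) = 1" using index[of N] lseq_index_bounds[OF N, of J kstar] by simp
  then have "fst (lseq J N (Suc (kstar + N))) = lam_update Pi V owner E F J N 1 (fst (lseq J N (kstar + N)))"
    by (simp add: lam_seq_Suc(1))
  then show ?thesis using const[rule_format, of "Suc N"] const[rule_format, of N] by simp
qed

section \<open>Existence of subgame perfect equilibria\<close>

definition default_play :: "'v \<times> 'p set \<Rightarrow> nat \<Rightarrow> 'v \<times> 'p set" where
  "default_play u = (\<lambda>n. (some_succ ^^ n) u)"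

lemma default_play_0 [simp]: "default_play u 0 = u"
  by (simp add: default_play_def)

text \<open>bi_play D n h extends h by n moves of backward induction in the game truncated at
  horizon D: each move minimises the truncated cost of its player, assuming backward induction
  afterwards.\<close>

primrec bi_play :: "nat \<Rightarrow> nat \<Rightarrow> ('v \<times> 'p set) list \<Rightarrow> nat \<Rightarrow> 'v \<times> 'p set" where
  "bi_play D 0 h = default_play (last h)"
| "bi_play D (Suc n) h = cons_play (last h) (bi_play D n (h @ [SOME w. (last h, w) \<in> EXs \<and>
      (\<forall>w'. (last h, w') \<in> EXs \<longrightarrow>
         horizon_cost D FXs (ownX (last h)) (prepend h (bi_play D n (h @ [w])))
           \<le> horizon_cost D FXs (ownX (last h)) (prepend h (bi_play D n (h @ [w'])))) ]))"

definition bi_move :: "nat \<Rightarrow> nat \<Rightarrow> ('v \<times> 'p set) list \<Rightarrow> 'v \<times> 'p set" where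
  "bi_move D n h = (SOME w. (last h, w) \<in> EXs \<and>
      (\<forall>w'. (last h, w') \<in> EXs \<longrightarrow>
         horizon_cost D FXs (ownX (last h)) (prepend h (bi_play D n (h @ [w])))
           \<le> horizon_cost D FXs (ownX (last h)) (prepend h (bi_play D n (h @ [w'])))))"

definition bi_profile :: "nat \<Rightarrow> 'p \<Rightarrow> ('v \<times> 'p set) list \<Rightarrow> 'v \<times> 'p set" where
  "bi_profile D i h = bi_move D (D - length h) h"

lemma bi_play_Suc: "bi_play D (Suc n) h = cons_play (last h) (bi_play D n (h @ [bi_move D n h]))"
  by (simp add: bi_move_def)

declare bi_play.simps(2) [simp del]

lemma bi_move:
  assumes "last h \<in> VXs"
  shows "(last h, bi_move D n h) \<in> EXs"
    and "(last h, w') \<in> EXs \<Longrightarrow>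
      horizon_cost D FXs (ownX (last h)) (prepend h (bi_play D n (h @ [bi_move D n h])))
        \<le> horizon_cost D FXs (ownX (last h)) (prepend h (bi_play D n (h @ [w'])))"
proof -
  let ?c = "\<lambda>w. horizon_cost D FXs (ownX (last h)) (prepend h (bi_play D n (h @ [w])))"
  have "{w. (last h, w) \<in> EXs} \<noteq> {}" using edgeX_succ_ex[OF assms] by blast
  from ex_min_on[OF this, of ?c]
  have "\<exists>w. (last h, w) \<in> EXs \<and> (\<forall>w'. (last h, w') \<in> EXs \<longrightarrow> ?c w \<le> ?c w')"
    by blast
  then have "(last h, bi_move D n h) \<in> EXs \<and> (\<forall>w'. (last h, w') \<in> EXs \<longrightarrow> ?c (bi_move D n h) \<le> ?c w')"
    unfolding bi_move_def by (rule someI_ex)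
  then show "(last h, bi_move D n h) \<in> EXs" "(last h, w') \<in> EXs \<Longrightarrow> ?c (bi_move D n h) \<le> ?c w'"
    by blast+
qed

lemma valid_bi_profile: "valid_profile Pi VXs ownX EXs (bi_profile D)"
  using bi_move(1) histX_last_in_VX by (simp add: valid_profile_def valid_strategy_def bi_profile_def)

lemma outcome_bi_profile:
  assumes "length g + n = D + 1" "g \<noteq> []" "p \<le> n"
  shows "subgame_outcome (bi_profile D) g p = bi_play D n g p"
  using assms
proof (induction n arbitrary: g p)
  case (Suc n)
  let ?\<rho> = "subgame_outcome (bi_profile D) g" and ?w = "bi_move D n g"
  have g_eq: "butlast g @ [last g] = g" using Suc.prems by simp
  have "D - length g = n" using Suc.prems(1) by simp
  then have "?\<rho> 1 = ?w"
    using outcome_Suc[of ownX "restrict_profile (bi_profile D) (butlast g)" "last g" 0] g_eq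
    by (simp add: bi_profile_def)
  then have sf: "suffix_play ?\<rho> 1 = subgame_outcome (bi_profile D) (g @ [?w])"
    using suffix_outcome_restrict_profile[of ?\<rho> ownX "bi_profile D" "butlast g" "last g" 1] g_eq by simp
  note IH = Suc.IH and prems = Suc.prems
  show ?case
  proof (cases p)
    case (Suc q)
    have "?\<rho> p = suffix_play ?\<rho> 1 q" using Suc by simp
    also have "\<dots> = subgame_outcome (bi_profile D) (g @ [?w]) q" by (simp only: sf)
    also have "\<dots> = bi_play D n (g @ [?w]) q" by (rule IH) (use prems Suc in auto)
    also have "\<dots> = bi_play D (Suc n) g p" using Suc by (simp add: bi_play_Suc)
    finally show ?thesis .
  qed (simp add: bi_play_Suc)
qed simp

lemma bi_play_horizon_optimal:
  assumes "length g + n = D + 1" "g \<noteq> []" "is_play EXs \<rho>" "\<rho> 0 = last g"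
    and "follows_except j (bi_profile D) (butlast g) \<rho>"
  shows "horizon_cost D FXs j (prepend (butlast g) (bi_play D n g))
           \<le> horizon_cost D FXs j (prepend (butlast g) \<rho>)"
  using assms
proof (induction n arbitrary: g \<rho>)
  case 0
  then have "\<forall>p\<le>D. prepend (butlast g) (bi_play D 0 g) p = prepend (butlast g) \<rho> p"
    by (auto simp: prepend_def)
  then have "horizon_cost D FXs j (prepend (butlast g) (bi_play D 0 g))
      = horizon_cost D FXs j (prepend (butlast g) \<rho>)"
    by (rule horizon_cost_agree)
  then show ?case by simp
next
  case (Suc n)
  let ?b = "butlast g" and ?v = "last g" and ?w = "\<rho> 1" and ?\<rho>' = "suffix_play \<rho> 1"
  have g_eq: "?b @ [?v] = g" using Suc.prems by simp
  have e: "(?v, ?w) \<in> EXs" using Suc.prems(3,4) by (metis One_nat_def is_play_def)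
  have left: "prepend ?b (bi_play D (Suc n) g) = prepend g (bi_play D n (g @ [bi_move D n g]))"
    by (simp only: bi_play_Suc prepend_cons_play g_eq)
  have right: "prepend ?b \<rho> = prepend g ?\<rho>'"
    using prepend_butlast[where g=g and \<rho>=\<rho>, OF Suc.prems(2) Suc.prems(4)] .
  have play: "is_play EXs ?\<rho>'" using Suc.prems(3) by (simp add: is_play_def)
  have follow: "follows_except j (bi_profile D) (butlast (g @ [?w])) ?\<rho>'"
    using follows_except_suffix[OF Suc.prems(5,2,4)] by simp
  have "horizon_cost D FXs j (prepend (butlast (g @ [?w])) (bi_play D n (g @ [?w])))
      \<le> horizon_cost D FXs j (prepend (butlast (g @ [?w])) ?\<rho>')"
    by (rule Suc.IH[OF _ _ play _ follow]) (use Suc.prems(1) in simp_all)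
  then have IH: "horizon_cost D FXs j (prepend g (bi_play D n (g @ [?w])))
      \<le> horizon_cost D FXs j (prepend g ?\<rho>')"
    by (simp only: butlast_snoc)
  show ?case
  proof (cases "ownX ?v = j")
    case False
    then have "?w = bi_profile D (ownX ?v) (?b @ map \<rho> [0..<Suc 0])"
      using Suc.prems(4,5) unfolding follows_except_def by (metis One_nat_def)
    moreover have "?b @ map \<rho> [0..<Suc 0] = g" using g_eq Suc.prems(4) by simp
    moreover have "D - length g = n" using Suc.prems(1) by simp
    ultimately have "?w = bi_move D n g" by (metis bi_profile_def)
    then show ?thesis using left right IH by simp
  next
    case True
    have "?v \<in> VXs" using e edgeX_in_VX by blast
    then have "horizon_cost D FXs j (prepend g (bi_play D n (g @ [bi_move D n g])))
        \<le> horizon_cost D FXs j (prepend g (bi_play D n (g @ [?w])))"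
      using bi_move(2)[OF _ e] True by simp
    then show ?thesis unfolding left right using IH by (rule order_trans)
  qed
qed

lemma bi_profile_horizon_NE:
  assumes g: "histX g" "length g \<le> D + 1" and \<tau>: "valid_strategy VXs ownX EXs j \<tau>"
  shows "horizon_cost D FXs j (prepend (butlast g) (subgame_outcome (bi_profile D) g))
     \<le> horizon_cost D FXs j (prepend (butlast g)
          (outcome ownX ((restrict_profile (bi_profile D) (butlast g))(j := \<tau>)) (last g)))"
proof -
  let ?b = "butlast g" and ?v = "last g" and ?n = "D + 1 - length g"
  let ?\<sigma>' = "(restrict_profile (bi_profile D) ?b)(j := \<tau>)"
  let ?\<rho>' = "outcome ownX ?\<sigma>' ?v"
  have g_ne: "g \<noteq> []" using g by (simp add: is_hist_def)
  have len: "length ?b + ?n = D" using g(2) g_ne by (cases "length g") auto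
  have "histX (?b @ [?v])" using g g_ne by simp
  then have "?\<rho>' \<in> plays_from EXs ?v"
    using outcome_valid_from(1) valid_from_deviation[OF valid_from_restrict_profile[OF valid_bi_profile] \<tau>]
    by blast
  then have play: "is_play EXs ?\<rho>'" and start: "?\<rho>' 0 = ?v" by (simp_all add: plays_from_def)
  have follow: "follows_except j (bi_profile D) ?b ?\<rho>'"
    by (rule follows_except_deviation)
  have optimal: "horizon_cost D FXs j (prepend ?b (bi_play D ?n g)) \<le> horizon_cost D FXs j (prepend ?b ?\<rho>')"
    by (rule bi_play_horizon_optimal[OF _ g_ne play start follow]) (use g(2) g_ne in simp)
  have agree: "\<forall>p\<le>?n. subgame_outcome (bi_profile D) g p = bi_play D ?n g p"
    by (intro allI impI outcome_bi_profile) (use g(2) g_ne in simp_all)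
  have "\<forall>p\<le>D. prepend ?b (subgame_outcome (bi_profile D) g) p = prepend ?b (bi_play D ?n g) p"
  proof (intro allI impI)
    fix p assume "p \<le> D"
    then show "prepend ?b (subgame_outcome (bi_profile D) g) p = prepend ?b (bi_play D ?n g) p"
      by (intro prepend_agree[OF agree]) (simp add: len)
  qed
  then have "horizon_cost D FXs j (prepend ?b (subgame_outcome (bi_profile D) g))
      = horizon_cost D FXs j (prepend ?b (bi_play D ?n g))"
    by (rule horizon_cost_agree)
  then show ?thesis using optimal by simp
qed

definition agree_upto ::
    "nat \<Rightarrow> ('p \<Rightarrow> ('v \<times> 'p set) list \<Rightarrow> 'v \<times> 'p set) \<Rightarrow> ('p \<Rightarrow> ('v \<times> 'p set) list \<Rightarrow> 'v \<times> 'p set) \<Rightarrow> bool" where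
  "agree_upto L \<sigma> \<sigma>' \<longleftrightarrow> (\<forall>i\<in>Pi. \<forall>h. set h \<subseteq> VXs \<and> h \<noteq> [] \<and> length h \<le> L \<longrightarrow> \<sigma> i h = \<sigma>' i h)"

lemma ex_limit_of_bi_profiles: "\<exists>\<sigma>. \<forall>L D. \<exists>d\<ge>D. agree_upto L (bi_profile d) \<sigma>"
proof -
  define K where "K L = {(i, h). i \<in> Pi \<and> set h \<subseteq> VXs \<and> h \<noteq> [] \<and> length h \<le> L}" for L
  have finite_K: "finite (K L)" for L
  proof (rule finite_subset)
    show "K L \<subseteq> Pi \<times> {h. set h \<subseteq> VXs \<and> length h \<le> L}" by (auto simp: K_def)
    show "finite (Pi \<times> {h. set h \<subseteq> VXs \<and> length h \<le> L})"
      using finite_Pi finite_lists_length_le[OF finite_VX] by blast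
  qed
  have K_mono: "K L \<subseteq> K (Suc L)" for L by (auto simp: K_def)
  have in_VX: "case_prod (bi_profile d) x \<in> VXs" if x: "x \<in> K L" for d L x
  proof -
    obtain i h where "x = (i, h)" "set h \<subseteq> VXs" "h \<noteq> []" using x by (auto simp: K_def)
    then have "last h \<in> VXs" by auto
    then show ?thesis
      using edgeX_in_VX[OF bi_move(1)] \<open>x = (i, h)\<close> by (simp add: bi_profile_def)
  qed
  have "\<exists>t. \<forall>L D. \<exists>d\<ge>D. \<forall>x\<in>K L. case_prod (bi_profile d) x = t x"
    by (rule ex_cluster_map[where B = VXs]) (use finite_K K_mono finite_VX in_VX in auto)
  then obtain t where t: "\<forall>L D. \<exists>d\<ge>D. \<forall>x\<in>K L. case_prod (bi_profile d) x = t x" by blast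
  have "agree_upto L (bi_profile d) (curry t)" if "\<forall>x\<in>K L. case_prod (bi_profile d) x = t x" for L d
    using that by (auto simp: agree_upto_def K_def)
  then show ?thesis using t by blast
qed

lemma outcome_agree_upto:
  assumes valid: "valid_from b v \<sigma>" and bv: "histX (b @ [v])"
    and agree: "\<forall>h. histX (b @ h) \<and> h \<noteq> [] \<and> length (b @ h) \<le> L
                  \<longrightarrow> \<sigma> (ownX (last h)) h = \<sigma>' (ownX (last h)) h"
    and p: "length b + p < L"
  shows "outcome ownX \<sigma> v p = outcome ownX \<sigma>' v p"
proof -
  let ?\<rho> = "outcome ownX \<sigma> v" and ?M = "L - Suc (length b)"
  have "\<forall>m<?M. \<sigma> (ownX (?\<rho> m)) (map ?\<rho> [0..<Suc m]) = \<sigma>' (ownX (?\<rho> m)) (map ?\<rho> [0..<Suc m])"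
  proof (intro allI impI)
    fix m assume m: "m < ?M"
    let ?h = "map ?\<rho> [0..<Suc m]"
    have "histX (b @ ?h)" using outcome_valid_from(2)[OF valid bv] .
    moreover have "?h \<noteq> []" by simp
    moreover have "length (b @ ?h) \<le> L" using m by simp
    ultimately have "\<sigma> (ownX (last ?h)) ?h = \<sigma>' (ownX (last ?h)) ?h" using agree by blast
    moreover have "last ?h = ?\<rho> m" by simp
    ultimately show "\<sigma> (ownX (?\<rho> m)) ?h = \<sigma>' (ownX (?\<rho> m)) ?h" by simp
  qed
  then have "\<forall>p\<le>?M. ?\<rho> p = outcome ownX \<sigma>' v p" by (rule outcome_prefix_agree[OF refl refl])
  then show ?thesis using p by simp
qed

lemma agree_upto_restrict_profile:
  assumes "agree_upto L \<sigma> \<sigma>'" "histX (b @ h)" "h \<noteq> []" "length (b @ h) \<le> L"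
  shows "restrict_profile \<sigma> b (ownX (last h)) h = restrict_profile \<sigma>' b (ownX (last h)) h"
proof -
  have "ownX (last h) \<in> Pi" using assms(2,3) histX_appendD histX_last_in_VX ownX_in_Pi by blast
  moreover have "set (b @ h) \<subseteq> VXs" using assms(2) by (simp add: is_hist_def)
  ultimately show ?thesis using assms(1,3,4) by (simp add: agree_upto_def)
qed

text \<open>A profitable deviation from the limit profile would already be profitable within a finite
  horizon, where the limit agrees with some bi_profile D.\<close>

lemma NE_sub_limit_of_bi_profiles:
  assumes lim: "\<forall>L D. \<exists>d\<ge>D. agree_upto L (bi_profile d) \<sigma>"
    and valid: "valid_profile Pi VXs ownX EXs \<sigma>" and g: "histX g"
  shows "is_NE_sub Pi VXs ownX EXs FXs (butlast g) (last g) (restrict_profile \<sigma> (butlast g))"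
  unfolding is_NE_sub_def
proof (intro ballI allI impI)
  fix j \<tau> assume \<tau>: "valid_strategy VXs ownX EXs j \<tau>"
  let ?b = "butlast g" and ?v = "last g"
  let ?\<rho> = "subgame_outcome \<sigma> g" and ?\<rho>' = "outcome ownX ((restrict_profile \<sigma> ?b)(j := \<tau>)) ?v"
  have g_ne: "g \<noteq> []" using g by (simp add: is_hist_def)
  have bv: "histX (?b @ [?v])" using g g_ne by simp
  show "costX j (prepend ?b ?\<rho>) \<le> costX j (prepend ?b ?\<rho>')"
  proof (rule enat_le_by_finite_bounds)
    fix c assume c: "costX j (prepend ?b ?\<rho>') \<le> enat c"
    let ?L = "length g + c"
    obtain D where D: "?L \<le> D" and agree: "agree_upto ?L (bi_profile D) \<sigma>" using lim by blast
    let ?\<rho>D = "subgame_outcome (bi_profile D) g"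
    let ?\<rho>'D = "outcome ownX ((restrict_profile (bi_profile D) ?b)(j := \<tau>)) ?v"
    have "length g > 0" using g_ne by simp
    then have within: "length ?b + p < ?L" if "length ?b + p \<le> c" for p using that by linarith
    have "\<forall>h. histX (?b @ h) \<and> h \<noteq> [] \<and> length (?b @ h) \<le> ?L \<longrightarrow>
        restrict_profile (bi_profile D) ?b (ownX (last h)) h = restrict_profile \<sigma> ?b (ownX (last h)) h"
      using agree_upto_restrict_profile[OF agree] by blast
    then have "\<forall>p. length ?b + p \<le> c \<longrightarrow> ?\<rho>D p = ?\<rho> p"
      using outcome_agree_upto[OF valid_from_restrict_profile[OF valid_bi_profile] bv] within by blast
    then have \<rho>: "costX j (prepend ?b ?\<rho>D) \<le> enat c \<longleftrightarrow> costX j (prepend ?b ?\<rho>) \<le> enat c"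
      by (rule cost_prepend_le_enat_cong)
    have "\<forall>h. histX (?b @ h) \<and> h \<noteq> [] \<and> length (?b @ h) \<le> ?L \<longrightarrow>
        ((restrict_profile \<sigma> ?b)(j := \<tau>)) (ownX (last h)) h
        = ((restrict_profile (bi_profile D) ?b)(j := \<tau>)) (ownX (last h)) h"
    proof (intro allI impI)
      fix h assume "histX (?b @ h) \<and> h \<noteq> [] \<and> length (?b @ h) \<le> ?L"
      then show "((restrict_profile \<sigma> ?b)(j := \<tau>)) (ownX (last h)) h
          = ((restrict_profile (bi_profile D) ?b)(j := \<tau>)) (ownX (last h)) h"
        using agree_upto_restrict_profile[OF agree, of ?b h] by (cases "ownX (last h) = j") simp_all
    qed
    then have "\<forall>p. length ?b + p \<le> c \<longrightarrow> ?\<rho>' p = ?\<rho>'D p"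
      using outcome_agree_upto[OF valid_from_deviation[OF valid_from_restrict_profile[OF valid] \<tau>] bv]
        within by blast
    then have "costX j (prepend ?b ?\<rho>'D) \<le> enat c"
      using c by (simp only: cost_prepend_le_enat_cong)
    then have "horizon_cost D FXs j (prepend ?b ?\<rho>'D) \<le> enat c"
      by (rule horizon_cost_le) (use D in simp)
    moreover have "horizon_cost D FXs j (prepend ?b ?\<rho>D) \<le> horizon_cost D FXs j (prepend ?b ?\<rho>'D)"
      by (rule bi_profile_horizon_NE[OF g _ \<tau>]) (use D in simp)
    ultimately have "costX j (prepend ?b ?\<rho>D) \<le> enat c"
      using cost_le_horizon_cost[of FXs j "prepend ?b ?\<rho>D" D] by simp
    then show "costX j (prepend ?b ?\<rho>) \<le> enat c" using \<rho> by simp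
  qed
qed

lemma ex_SPE: "\<exists>\<sigma>. is_SPE Pi VXs ownX EXs FXs u0 \<sigma>"
proof -
  obtain \<sigma> where lim: "\<forall>L D. \<exists>d\<ge>D. agree_upto L (bi_profile d) \<sigma>"
    using ex_limit_of_bi_profiles by blast
  have valid: "valid_profile Pi VXs ownX EXs \<sigma>"
    unfolding valid_profile_def valid_strategy_def
  proof (intro ballI allI impI)
    fix i h assume i: "i \<in> Pi" and h: "histX h \<and> ownX (last h) = i"
    obtain d where "agree_upto (length h) (bi_profile d) \<sigma>" using lim by blast
    moreover have "set h \<subseteq> VXs" "h \<noteq> []" using h by (auto simp: is_hist_def)
    ultimately have "\<sigma> i h = bi_profile d i h" using i unfolding agree_upto_def by simp
    moreover have "(last h, bi_profile d i h) \<in> EXs"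
      using h histX_last_in_VX bi_move(1) by (simp add: bi_profile_def)
    ultimately show "(last h, \<sigma> i h) \<in> EXs" by simp
  qed
  then have "is_SPE Pi VXs ownX EXs FXs u0 \<sigma>"
    unfolding is_SPE_def using NE_sub_limit_of_bi_profiles[OF lim valid] by blast
  then show ?thesis by blast
qed

lemma consistent_lseq_nonempty:
  assumes "u \<in> VXs"
  shows "consistent (fst (lseq J N k)) u \<noteq> {}"
proof -
  obtain \<sigma> where "is_SPE Pi VXs ownX EXs FXs u \<sigma>" using ex_SPE by blast
  moreover have "histX [u]" "hd [u] = u" using assms by simp_all
  ultimately have "subgame_outcome \<sigma> [u] \<in> consistent (fst (lseq J N k)) (last [u])"
    by (rule SPE_subgame_outcomes_consistent)
  then show ?thesis by (auto simp del: restrict_profile_Nil)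
qed

section \<open>Compactness of consistent plays\<close>

lemma consistent_limit:
  assumes R: "\<And>d. R d \<in> consistent lam u" and lim: "\<And>L. \<exists>d. \<forall>p\<le>L. R d p = \<rho> p"
  shows "\<rho> \<in> consistent lam u"
proof -
  obtain d where "\<forall>p\<le>0. R d p = \<rho> p" using lim by blast
  then have "\<rho> 0 = u" using R[of d] by (simp add: Lam_def plays_from_def)
  moreover have "(\<rho> n, \<rho> (Suc n)) \<in> EXs" for n
  proof -
    obtain d where "\<forall>p\<le>Suc n. R d p = \<rho> p" using lim by blast
    moreover have "(R d n, R d (Suc n)) \<in> EXs" using R[of d] by (simp add: Lam_def plays_from_def is_play_def)
    ultimately show ?thesis by simp
  qed
  moreover have "costX (ownX (\<rho> n)) (suffix_play \<rho> n) \<le> lam (\<rho> n)" for n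
  proof (cases "lam (\<rho> n)")
    case (enat c)
    obtain d where d: "\<forall>p\<le>n + c. R d p = \<rho> p" using lim by blast
    then have "R d n = \<rho> n" by simp
    moreover have "costX (ownX (R d n)) (suffix_play (R d) n) \<le> lam (R d n)"
      using R[of d] by (simp add: Lam_def)
    ultimately have "costX (ownX (\<rho> n)) (suffix_play (R d) n) \<le> enat c" using enat by simp
    then obtain p where "p \<le> c" "R d (n + p) \<in> FXs (ownX (\<rho> n))" by (auto simp: cost_le_enat_iff)
    moreover have "R d (n + p) = \<rho> (n + p)" using d \<open>p \<le> c\<close> by simp
    ultimately have "costX (ownX (\<rho> n)) (suffix_play \<rho> n) \<le> enat c"
      by (auto simp: cost_le_enat_iff)
    then show ?thesis using enat by simp
  qed simp
  ultimately show ?thesis by (simp add: Lam_def plays_from_def is_play_def)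
qed

lemma consistent_infinite_cost:
  assumes R: "\<And>n. R n \<in> consistent lam u" "\<And>n. enat n < costX i (R n)"
  shows "\<exists>\<rho>\<in>consistent lam u. costX i \<rho> = \<infinity>"
proof -
  have in_VX: "R d p \<in> VXs" if "p \<in> {..L}" for d L p
    using R(1)[of d] play_in_VX by (simp add: Lam_def plays_from_def)
  have "\<exists>\<rho>. \<forall>L D. \<exists>d\<ge>D. \<forall>p\<in>{..L}. R d p = \<rho> p"
    by (rule ex_cluster_map[where K = "\<lambda>L. {..L}" and s = R, OF _ _ finite_VX in_VX]) auto
  then obtain \<rho> where lim: "\<forall>L D. \<exists>d\<ge>D. \<forall>p\<in>{..L}. R d p = \<rho> p" by blast
  have \<rho>: "\<rho> \<in> consistent lam u"
  proof (rule consistent_limit[OF R(1)])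
    fix L
    show "\<exists>d. \<forall>p\<le>L. R d p = \<rho> p" using lim by blast
  qed
  have "costX i \<rho> = \<infinity>"
  proof (rule ccontr)
    assume "costX i \<rho> \<noteq> \<infinity>"
    then obtain c where "costX i \<rho> = enat c" by auto
    then have "costX i \<rho> \<le> enat c" by simp
    then obtain p where p: "p \<le> c" "\<rho> p \<in> FXs i" by (auto simp: cost_le_enat_iff)
    obtain d where d: "d \<ge> c" "\<forall>p\<in>{..c}. R d p = \<rho> p" using lim by blast
    then have "R d p \<in> FXs i" using p by simp
    then have "costX i (R d) \<le> enat d"
      unfolding cost_le_enat_iff using p d by (intro exI[of _ p]) simp
    then show False using R(2)[of d] by simp
  qed
  then show ?thesis using \<rho> by blast
qed

lemma consistent_SUP_attained:
  assumes ne: "consistent lam u \<noteq> {}"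
  shows "\<exists>\<rho>\<in>consistent lam u. costX i \<rho> = (SUP \<rho>\<in>consistent lam u. costX i \<rho>)"
proof (cases "finite (costX i ` consistent lam u)")
  case True
  have "(SUP \<rho>\<in>consistent lam u. costX i \<rho>) = Max (costX i ` consistent lam u)"
    using True ne by (simp add: Sup_enat_def)
  moreover have "Max (costX i ` consistent lam u) \<in> costX i ` consistent lam u"
    using True ne by simp
  ultimately show ?thesis by auto
next
  case False
  then have sup: "(SUP \<rho>\<in>consistent lam u. costX i \<rho>) = \<infinity>" using ne by (simp add: Sup_enat_def)
  have "\<forall>n. \<exists>\<rho>. \<rho> \<in> consistent lam u \<and> enat n < costX i \<rho>"
  proof (rule ccontr)
    assume "\<not> (\<forall>n. \<exists>\<rho>. \<rho> \<in> consistent lam u \<and> enat n < costX i \<rho>)"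
    then obtain n where "\<forall>\<rho>\<in>consistent lam u. costX i \<rho> \<le> enat n" by (auto simp: not_less)
    then have "finite (costX i ` consistent lam u)" by (intro finite_enat_bounded) auto
    then show False using False by simp
  qed
  from choice[OF this] obtain R where "\<forall>n. R n \<in> consistent lam u \<and> enat n < costX i (R n)"
    by blast
  then show ?thesis using consistent_infinite_cost[of R] sup by auto
qed

end

section \<open>Consistent plays are equilibrium outcomes\<close>

text \<open>The plan after a history, computed on the reversed history: keep following the current
  plan, and after a deviation from x to w switch to the punishment play chosen for (x, w).\<close>

fun plan_rev :: "(nat \<Rightarrow> 'a) \<Rightarrow> ('a \<Rightarrow> 'a \<Rightarrow> nat \<Rightarrow> 'a) \<Rightarrow> 'a list \<Rightarrow> nat \<Rightarrow> 'a" where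
  "plan_rev \<rho>0 pun [] = \<rho>0"
| "plan_rev \<rho>0 pun [x] = \<rho>0"
| "plan_rev \<rho>0 pun (w # x # r) =
     (let \<pi> = plan_rev \<rho>0 pun (x # r) in if w = \<pi> 1 then suffix_play \<pi> 1 else pun x w)"

lemma plan_rev_snoc:
  assumes "g \<noteq> []"
  shows "plan_rev \<rho>0 pun (rev (g @ [w])) =
    (if w = plan_rev \<rho>0 pun (rev g) 1 then suffix_play (plan_rev \<rho>0 pun (rev g)) 1
     else pun (last g) w)"
proof -
  obtain x r where xr: "rev g = x # r" using assms by (cases "rev g") auto
  then have "last g = x" by (metis last_rev list.sel(1) rev_rev_ident)
  then show ?thesis using xr by simp
qed

locale punishing_labelling = extended_game Pi V owner E F
  for Pi :: "'p set" and V :: "'v set" and owner E F +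
  fixes u0 :: "'v \<times> 'p set" and \<rho>0 :: "nat \<Rightarrow> 'v \<times> 'p set" and lam :: "('v, 'p) labeling"
  assumes u0_in_VX: "u0 \<in> VXs"
    and \<rho>0_consistent: "\<rho>0 \<in> consistent lam u0"
    and punishment_ex: "\<And>x w. (u0, x) \<in> EXs\<^sup>* \<Longrightarrow> (x, w) \<in> EXs \<Longrightarrow>
                           \<exists>\<pi>\<in>consistent lam w. lam x \<le> 1 + costX (ownX x) \<pi>"
begin

definition punishment :: "'v \<times> 'p set \<Rightarrow> 'v \<times> 'p set \<Rightarrow> nat \<Rightarrow> 'v \<times> 'p set" where
  "punishment x w = (SOME \<pi>. \<pi> \<in> consistent lam w \<and> lam x \<le> 1 + costX (ownX x) \<pi>)"

definition plan :: "('v \<times> 'p set) list \<Rightarrow> nat \<Rightarrow> 'v \<times> 'p set" where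
  "plan g = plan_rev \<rho>0 punishment (rev g)"

definition plan_profile :: "'p \<Rightarrow> ('v \<times> 'p set) list \<Rightarrow> 'v \<times> 'p set" where
  "plan_profile i h = (if histX h \<and> hd h = u0 then plan h 1 else some_succ (last h))"

lemma plan_single: "plan [x] = \<rho>0"
  by (simp add: plan_def)

lemma plan_snoc:
  "g \<noteq> [] \<Longrightarrow> plan (g @ [w]) = (if w = plan g 1 then suffix_play (plan g) 1 else punishment (last g) w)"
  unfolding plan_def by (rule plan_rev_snoc)

lemma punishment:
  assumes "(u0, x) \<in> EXs\<^sup>*" "(x, w) \<in> EXs"
  shows "punishment x w \<in> consistent lam w \<and> lam x \<le> 1 + costX (ownX x) (punishment x w)"
  unfolding punishment_def using punishment_ex[OF assms] by (rule someI2_bex) blast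

lemma plan_consistent:
  assumes "histX g" "hd g = u0"
  shows "(u0, last g) \<in> EXs\<^sup>* \<and> plan g \<in> consistent lam (last g)"
  using assms
proof (induction g rule: rev_induct)
  case (snoc w g)
  show ?case
  proof (cases "g = []")
    case True
    then show ?thesis using snoc.prems \<rho>0_consistent plan_single by simp
  next
    case False
    then have hist: "histX g" and e: "(last g, w) \<in> EXs" using snoc.prems histX_snoc by auto
    have "hd g = u0" using snoc.prems False by simp
    then have IH: "(u0, last g) \<in> EXs\<^sup>*" "plan g \<in> consistent lam (last g)" using snoc.IH hist by auto
    have "plan (g @ [w]) \<in> consistent lam w"
      using plan_snoc[OF False, of w] consistent_suffix[OF IH(2), of 1] punishment[OF IH(1) e]
      by (cases "w = plan g 1") simp_all
    then show ?thesis using rtrancl_into_rtrancl[OF IH(1) e] by simp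
  qed
qed (simp add: is_hist_def)

lemma plan_play:
  assumes "histX g" "hd g = u0"
  shows "is_play EXs (plan g)" "plan g 0 = last g"
  using plan_consistent[OF assms] by (simp_all add: Lam_def plays_from_def)

lemma valid_plan_profile: "valid_profile Pi VXs ownX EXs plan_profile"
  unfolding valid_profile_def valid_strategy_def
proof (intro ballI allI impI)
  fix i h assume h: "histX h \<and> ownX (last h) = i"
  show "(last h, plan_profile i h) \<in> EXs"
  proof (cases "hd h = u0")
    case True
    have "histX h" using h by simp
    then have "is_play EXs (plan h)" "plan h 0 = last h" using plan_play[OF _ True] by auto
    then have "(last h, plan h 1) \<in> EXs" unfolding is_play_def by (metis One_nat_def)
    then show ?thesis using h True by (simp add: plan_profile_def)
  next
    case False
    then show ?thesis using h some_succ histX_last_in_VX by (simp add: plan_profile_def)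
  qed
qed

lemma subgame_outcome_plan_profile:
  assumes g: "histX g" "hd g = u0"
  shows "subgame_outcome plan_profile g = plan g"
proof (rule outcome_eqI)
  let ?\<rho> = "plan g" and ?b = "butlast g"
  have g_ne: "g \<noteq> []" using g by (simp add: is_hist_def)
  show start: "?\<rho> 0 = last g" using plan_play[OF g] by simp
  have prefix: "histX (?b @ map ?\<rho> [0..<Suc n]) \<and> hd (?b @ map ?\<rho> [0..<Suc n]) = u0 \<and>
      plan (?b @ map ?\<rho> [0..<Suc n]) = suffix_play ?\<rho> n" for n
  proof (induction n)
    case 0
    have "?b @ map ?\<rho> [0..<Suc 0] = g" using g_ne start by simp
    then show ?case using g by simp
  next
    case (Suc n)
    let ?g = "?b @ map ?\<rho> [0..<Suc n]"
    have g_ne': "?g \<noteq> []" by simp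
    have "(?\<rho> n, ?\<rho> (Suc n)) \<in> EXs" using plan_play[OF g] by (simp add: is_play_def)
    then have "histX (?g @ [?\<rho> (Suc n)])" using Suc.IH histX_snoc[OF g_ne'] by simp
    moreover have "hd (?g @ [?\<rho> (Suc n)]) = u0" using Suc.IH hd_append2[OF g_ne'] by simp
    moreover have "plan (?g @ [?\<rho> (Suc n)]) = suffix_play ?\<rho> (Suc n)"
    proof -
      have "plan ?g 1 = ?\<rho> (Suc n)" using Suc.IH by simp
      then have "plan (?g @ [?\<rho> (Suc n)]) = suffix_play (plan ?g) 1" using plan_snoc[OF g_ne'] by simp
      also have "\<dots> = suffix_play ?\<rho> (Suc n)" using Suc.IH by (simp only: suffix_suffix_play Suc_eq_plus1)
      finally show ?thesis .
    qed
    moreover have "?b @ map ?\<rho> [0..<Suc (Suc n)] = ?g @ [?\<rho> (Suc n)]" by simp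
    ultimately show ?case by (simp only:)
  qed
  fix n
  show "?\<rho> (Suc n) = restrict_profile plan_profile ?b (ownX (?\<rho> n)) (map ?\<rho> [0..<Suc n])"
    using prefix[of n] by (simp del: upt_Suc add: plan_profile_def)
qed

text \<open>If j deviates at x, the punishment costs j at least lam x - 1, while consistency bounds
  the cost of j along the plan by lam x.\<close>

lemma plan_cost_le_plan_snoc:
  assumes g: "histX g" "hd g = u0" and e: "(last g, w) \<in> EXs"
    and "w = plan g 1 \<or> ownX (last g) = j"
  shows "costX j (plan g) \<le> eSuc (costX j (plan (g @ [w])))"
proof (cases "w = plan g 1")
  case True
  have "g \<noteq> []" using g by (simp add: is_hist_def)
  then have "plan (g @ [w]) = suffix_play (plan g) 1" using True plan_snoc by simp
  then show ?thesis using cost_le_eSuc_cost_suffix[of FXs j "plan g"] by simp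
next
  case False
  with assms(4) have owner: "ownX (last g) = j" by blast
  have "g \<noteq> []" using g by (simp add: is_hist_def)
  then have "plan (g @ [w]) = punishment (last g) w" using False plan_snoc by simp
  moreover have "(u0, last g) \<in> EXs\<^sup>*" using plan_consistent[OF g] by blast
  ultimately have "lam (last g) \<le> 1 + costX j (plan (g @ [w]))" using punishment[OF _ e] owner by simp
  moreover have "costX j (plan g) \<le> lam (last g)"
  proof -
    have "\<forall>n. costX (ownX (plan g n)) (suffix_play (plan g) n) \<le> lam (plan g n)"
      using plan_consistent[OF g] by (simp add: Lam_def)
    from this[rule_format, of 0] show ?thesis using plan_play(2)[OF g] owner by simp
  qed
  ultimately show ?thesis by (simp add: plus_1_eSuc)
qed

lemma plan_cost_le_deviation:
  assumes "histX g" "hd g = u0" "\<rho> \<in> plays_from EXs (last g)"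
    and "follows_except j plan_profile (butlast g) \<rho>" and "costX j \<rho> = enat c"
  shows "costX j (plan g) \<le> enat c"
  using assms
proof (induction c arbitrary: g \<rho>)
  case 0
  then have "\<rho> 0 \<in> FXs j" "\<rho> 0 = last g" by (simp_all add: cost_eq_0_iff zero_enat_def[symmetric] plays_from_def)
  then have "costX j (plan g) = 0" using plan_play[OF "0.prems"(1,2)] by (simp add: cost_eq_0_iff)
  then show ?case by (simp add: zero_enat_def)
next
  case (Suc c)
  have g_ne: "g \<noteq> []" using Suc.prems(1) by (simp add: is_hist_def)
  have play: "is_play EXs \<rho>" and start: "\<rho> 0 = last g" using Suc.prems(3) by (simp_all add: plays_from_def)
  show ?case
  proof (cases "\<rho> 0 \<in> FXs j")
    case True
    then have "costX j (plan g) = 0" using start plan_play[OF Suc.prems(1,2)] by (simp add: cost_eq_0_iff)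
    then show ?thesis by simp
  next
    case False
    let ?w = "\<rho> 1" and ?g = "g @ [\<rho> 1]"
    have "costX j \<rho> = eSuc (costX j (suffix_play \<rho> 1))" using False by (subst cost_unfold) simp
    then have suffix_cost: "costX j (suffix_play \<rho> 1) = enat c" using Suc.prems(5) by (simp add: eSuc_enat[symmetric])
    have e: "(last g, ?w) \<in> EXs" using play start by (metis One_nat_def is_play_def)
    have "histX ?g" using Suc.prems(1) e histX_snoc[OF g_ne] by simp
    moreover have "hd ?g = u0" using Suc.prems(2) g_ne by simp
    moreover have "suffix_play \<rho> 1 \<in> plays_from EXs (last ?g)" using play by (simp add: plays_from_def is_play_def)
    moreover have "follows_except j plan_profile (butlast ?g) (suffix_play \<rho> 1)"
      using follows_except_suffix[OF Suc.prems(4) g_ne start] by simp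
    ultimately have IH: "costX j (plan ?g) \<le> enat c" using Suc.IH suffix_cost by blast
    have "?w = plan g 1 \<or> ownX (last g) = j"
    proof (rule disjCI)
      assume "ownX (last g) \<noteq> j"
      then have "\<rho> (Suc 0) = plan_profile (ownX (\<rho> 0)) (butlast g @ map \<rho> [0..<Suc 0])"
        using Suc.prems(4) start unfolding follows_except_def by (simp del: upt_Suc)
      moreover have "butlast g @ map \<rho> [0..<Suc 0] = g" using start g_ne by simp
      ultimately show "?w = plan g 1" using Suc.prems(1,2) by (simp add: plan_profile_def)
    qed
    then have "costX j (plan g) \<le> eSuc (costX j (plan ?g))"
      by (rule plan_cost_le_plan_snoc[OF Suc.prems(1,2) e])
    also have "\<dots> \<le> eSuc (enat c)" using IH by simp
    finally show ?thesis by (simp add: eSuc_enat)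
  qed
qed

theorem SPE_plan_profile:
  "is_SPE Pi VXs ownX EXs FXs u0 plan_profile \<and> outcome ownX plan_profile u0 = \<rho>0"
proof
  show "outcome ownX plan_profile u0 = \<rho>0"
    using subgame_outcome_plan_profile[of "[u0]"] u0_in_VX plan_single by simp
  have "is_NE_sub Pi VXs ownX EXs FXs (butlast g) (last g) (restrict_profile plan_profile (butlast g))"
    if g: "histX g" "hd g = u0" for g
    unfolding is_NE_sub_def
  proof (intro ballI allI impI)
    fix j \<tau> assume \<tau>: "valid_strategy VXs ownX EXs j \<tau>"
    let ?\<rho>' = "outcome ownX ((restrict_profile plan_profile (butlast g))(j := \<tau>)) (last g)"
    have "histX (butlast g @ [last g])" using g by (simp add: is_hist_def)
    then have "?\<rho>' \<in> plays_from EXs (last g)"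
      using outcome_valid_from(1) valid_from_deviation[OF valid_from_restrict_profile[OF valid_plan_profile] \<tau>]
      by blast
    then have "costX j (plan g) \<le> costX j ?\<rho>'"
      using plan_cost_le_deviation[OF g _ follows_except_deviation] by (cases "costX j ?\<rho>'") auto
    then show "costX j (prepend (butlast g) (subgame_outcome plan_profile g)) \<le> costX j (prepend (butlast g) ?\<rho>')"
      using subgame_outcome_plan_profile[OF g] by (simp add: cost_prepend_mono)
  qed
  then show "is_SPE Pi VXs ownX EXs FXs u0 plan_profile"
    using valid_plan_profile by (simp add: is_SPE_def)
qed

end

context extended_game
begin

lemma reachable_in_VX: "(u, w) \<in> EXs\<^sup>* \<Longrightarrow> u \<in> VXs \<Longrightarrow> w \<in> VXs"
  by (induction rule: rtrancl_induct) (auto dest: edgeX_in_VX)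

lemma x0_in_VX: "v0 \<in> V \<Longrightarrow> x0 Pi F v0 \<in> VXs"
  by (auto simp: x0_def VX_def)

context
  fixes v0 J
  assumes v0: "v0 \<in> V" and J: "linear_ext Pi V E F v0 J"
begin

abbreviation "N \<equiv> card (reach_sets Pi V E F v0)"

lemma reach_sets_subset_Pow: "reach_sets Pi V E F v0 \<subseteq> Pow Pi"
proof
  fix I assume "I \<in> reach_sets Pi V E F v0"
  then obtain v where "(x0 Pi F v0, (v, I)) \<in> EXs\<^sup>*" by (auto simp: reach_sets_def)
  then have "(v, I) \<in> VXs" using reachable_in_VX x0_in_VX[OF v0] by blast
  then show "I \<in> Pow Pi" by (simp add: VX_def)
qed

lemma N_ge_1: "1 \<le> N"
proof -
  have "finite (reach_sets Pi V E F v0)"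
    by (rule finite_subset[OF reach_sets_subset_Pow]) (simp add: finite_Pi)
  moreover have "snd (x0 Pi F v0) \<in> reach_sets Pi V E F v0"
    unfolding reach_sets_def by (cases "x0 Pi F v0") auto
  ultimately have "0 < N" by (auto simp: card_gt_0_iff)
  then show ?thesis by simp
qed

lemma J_subset_Pi: "\<forall>m\<in>{1..N}. J m \<subseteq> Pi"
proof
  fix m assume m: "m \<in> {1..N}"
  have "bij_betw J {1..N} (reach_sets Pi V E F v0)" using J by (simp add: linear_ext_def)
  then have "J m \<in> reach_sets Pi V E F v0" using m by (rule bij_betw_apply)
  then show "J m \<subseteq> Pi" using reach_sets_subset_Pow by blast
qed

lemma reachable_in_Vge_1:
  assumes "(x0 Pi F v0, u) \<in> EXs\<^sup>*"
  shows "u \<in> Vge V J N 1"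
proof -
  obtain v I where u: "u = (v, I)" by fastforce
  have "v \<in> V" using reachable_in_VX[OF assms x0_in_VX[OF v0]] u by (simp add: VX_def)
  moreover have "I \<in> reach_sets Pi V E F v0" using assms u by (auto simp: reach_sets_def)
  then have "I \<in> J ` {1..N}" using J by (simp add: linear_ext_def bij_betw_def)
  then obtain m where "m \<in> {1..N}" "u = (v, J m)" using u by blast
  ultimately show ?thesis unfolding Vge_def by auto
qed

lemma lam_star_fixpoint: "lam_update Pi V owner E F J N 1 (lam_star Pi V owner E F v0 J) = lam_star Pi V owner E F v0 J"
  unfolding lam_star_def Let_def by (rule lseq_limit_fixpoint[OF J_subset_Pi N_ge_1])

text \<open>This is where the fixed point is used: the label of a reachable vertex x bounds the
  worst consistent continuation after any move of the owner of x.\<close>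

lemma lam_star_punishment_ex:
  assumes "(x0 Pi F v0, x) \<in> EXs\<^sup>*" "(x, w) \<in> EXs"
  shows "\<exists>\<pi>\<in>consistent (lam_star Pi V owner E F v0 J) w.
           lam_star Pi V owner E F v0 J x \<le> 1 + costX (ownX x) \<pi>"
proof -
  let ?lam = "lam_star Pi V owner E F v0 J"
  have x: "x \<in> Vge V J N 1" using reachable_in_Vge_1[OF assms(1)] .
  have "w \<in> VXs" using edgeX_in_VX[OF assms(2)] by simp
  then have "consistent ?lam w \<noteq> {}"
    unfolding lam_star_def Let_def by (rule consistent_lseq_nonempty)
  from consistent_SUP_attained[OF this, of "ownX x"] obtain \<pi>
    where \<pi>: "\<pi> \<in> consistent ?lam w" "costX (ownX x) \<pi> = (SUP \<rho>\<in>consistent ?lam w. costX (ownX x) \<rho>)"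
    by blast
  have fixpoint: "?lam x = lam_update Pi V owner E F J N 1 ?lam x"
    by (simp only: lam_star_fixpoint)
  have "?lam x \<le> 1 + costX (ownX x) \<pi>"
  proof (cases "ownX x \<in> snd x")
    case True
    have "?lam x = lam_update Pi V owner E F J N 1 ?lam x" by (fact fixpoint)
    also have "\<dots> = 0" using x True by (simp add: lam_update_def)
    finally show ?thesis by simp
  next
    case False
    have "?lam x = lam_update Pi V owner E F J N 1 ?lam x" by (fact fixpoint)
    also have "\<dots> = 1 + (INF u'\<in>{u'. (x, u') \<in> EXs}. SUP \<rho>\<in>consistent ?lam u'. costX (ownX x) \<rho>)"
      using x False by (simp add: lam_update_def)
    also have "\<dots> \<le> 1 + (SUP \<rho>\<in>consistent ?lam w. costX (ownX x) \<rho>)"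
      by (rule add_left_mono, rule INF_lower) (use assms(2) in simp)
    finally show ?thesis using \<pi>(2) by simp
  qed
  then show ?thesis using \<pi>(1) by blast
qed

lemma SPE_outcome_consistent:
  assumes "is_SPE Pi VXs ownX EXs FXs (x0 Pi F v0) \<sigma>"
  shows "outcome ownX \<sigma> (x0 Pi F v0) \<in> consistent (lam_star Pi V owner E F v0 J) (x0 Pi F v0)"
proof -
  have "histX [x0 Pi F v0]" "hd [x0 Pi F v0] = x0 Pi F v0" using x0_in_VX[OF v0] by simp_all
  then have "subgame_outcome \<sigma> [x0 Pi F v0] \<in> consistent (lam_star Pi V owner E F v0 J) (last [x0 Pi F v0])"
    unfolding lam_star_def Let_def by (rule SPE_subgame_outcomes_consistent[OF assms])
  then show ?thesis by simp
qed

lemma consistent_SPE_outcome: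
  assumes "\<rho>0 \<in> consistent (lam_star Pi V owner E F v0 J) (x0 Pi F v0)"
  shows "\<exists>\<sigma>. is_SPE Pi VXs ownX EXs FXs (x0 Pi F v0) \<sigma> \<and> outcome ownX \<sigma> (x0 Pi F v0) = \<rho>0"
proof -
  interpret punishing_labelling Pi V owner E F "x0 Pi F v0" \<rho>0 "lam_star Pi V owner E F v0 J"
    by unfold_locales (use x0_in_VX[OF v0] assms lam_star_punishment_ex in simp_all)
  show ?thesis using SPE_plan_profile by blast
qed

end

end

theorem theorem2p10:
  fixes Pi :: "'p set" and V :: "'v set" and owner :: "'v \<Rightarrow> 'p"
    and E :: "('v \<times> 'v) set" and F :: "'p \<Rightarrow> 'v set" and v0 :: 'v
    and J :: "nat \<Rightarrow> 'p set" and \<rho>0 :: "nat \<Rightarrow> 'v \<times> 'p set"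
  assumes "arena Pi V owner E"
    and "\<forall>i\<in>Pi. F i \<subseteq> V"
    and "v0 \<in> V"
    and "linear_ext Pi V E F v0 J"
    and "\<rho>0 \<in> plays_from (EdgeX Pi V E F) (x0 Pi F v0)"
  shows "(\<exists>\<sigma>. is_SPE Pi (VX Pi V) (ownerX owner) (EdgeX Pi V E F) (FX Pi V) (x0 Pi F v0) \<sigma>
              \<and> outcome (ownerX owner) \<sigma> (x0 Pi F v0) = \<rho>0)
         \<longleftrightarrow> \<rho>0 \<in> Lam Pi V owner E F (lam_star Pi V owner E F v0 J) (x0 Pi F v0)"
proof -
  interpret extended_game Pi V owner E F using assms(1) by unfold_locales
  show ?thesis using SPE_outcome_consistent[OF assms(3,4)] consistent_SPE_outcome[OF assms(3,4)] by blast
qed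

end
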